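(* For every $\beta \in \{\mathbf{G}, \mathbf{Psd}, \mathbf{Sd}\}$, $[\tau(\mathbf{SemWb})\mathbf{Txt}\beta\mathbf{Bc}] = [\tau(\mathbf{SemConv})\mathbf{Txt}\beta\mathbf{Bc}]$.
   Context: Fix an acceptable numbering $(\varphi_e)$ of partial computable functions, $W_e=\mathrm{dom}(\varphi_e)$. A text is a total function $T:\mathbb N\to\mathbb N\cup\{\#\}$, $\mathrm{content}(T)=\mathrm{range}(T)\setminus\{\#\}$, $T[n]=(T(0),\dots,T(n-1))$; $\mathbf{Txt}$ is the set of all texts, $\mathbf{Txt}(L)$ those with content $L$. Learners are partial computable functions; $\mathbf G(h,T)(i)=h(T[i])$, $\mathbf{Psd}(h,T)(i)=h(\mathrm{content}(T[i]),i)$, $\mathbf{Sd}(h,T)(i)=h(\mathrm{content}(T[i]))$. For total $p:\mathbb N\to\mathbb N$ and text $T$: $\mathbf{Bc}(p,T)$ iff $\exists n_0\,\forall n\ge n_0: W_{p(n)}=\mathrm{content}(T)$; $\mathbf{SemWb}(p,T)$ iff for all $n,m$: if there is $k$ with $n\le k\le m$ and $W_{p(n)}\ne W_{p(k)}$, then $(\mathrm{content}(T[m])\cap W_{p(m)})\setminus W_{p(n)}\ne\emptyset$; $\mathbf{SemConv}(p,T)$ iff for all $n<m$ with $\mathrm{content}(T[m])\subseteq W_{p(n)}$ we have $W_{p(n)}=W_{p(m)}$. A learner $h$ $\tau(\alpha)\mathbf{Txt}\beta\mathbf{Bc}$-learns $L$ iff for every $T\in\mathbf{Txt}$, $\beta(h,T)$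 is total and $\alpha(\beta(h,T),T)$ holds, and for every $T\in\mathbf{Txt}(L)$, $\mathbf{Bc}(\beta(h,T),T)$ holds. $[\cdot]$ is the set of classes learnable by a single learner under the criterion. *)

theory Defs
  imports Main "HOL-Library.Nat_Bijection"
begin

datatype recf =
    Z
  | S
  | Id nat
  | Cn recf "recf list"
  | Pr recf recf
  | Mn recf

inductive eval :: "recf \<Rightarrow> nat list \<Rightarrow> nat \<Rightarrow> bool" where
  eval_Z: "eval Z xs 0"
| eval_S: "eval S (x # xs) (Suc x)"
| eval_Id: "i < length xs \<Longrightarrow> eval (Id i) xs (xs ! i)"
| eval_Cn: "length zs = length gs \<Longrightarrow> (\<forall>i<length gs. eval (gs ! i) xs (zs ! i))
             \<Longrightarrow> eval f zs y \<Longrightarrow> eval (Cn f gs) xs y"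
| eval_Pr0: "eval f xs y \<Longrightarrow> eval (Pr f g) (0 # xs) y"
| eval_PrS: "eval (Pr f g) (x # xs) z \<Longrightarrow> eval g (x # z # xs) y
             \<Longrightarrow> eval (Pr f g) (Suc x # xs) y"
| eval_Mn: "eval f (x # xs) 0 \<Longrightarrow> (\<forall>y<x. \<exists>z. z \<noteq> 0 \<and> eval f (y # xs) z)
             \<Longrightarrow> eval (Mn f) xs x"

definition computable :: "(nat \<Rightarrow> nat option) \<Rightarrow> bool" where
  "computable f \<longleftrightarrow> (\<exists>r. \<forall>x y. f x = Some y \<longleftrightarrow> eval r [x] y)"

definition computable_numbering :: "(nat \<Rightarrow> nat \<Rightarrow> nat option) \<Rightarrow> bool" where
  "computable_numbering \<psi> \<longleftrightarrow>
     computable (\<lambda>n. \<psi> (fst (prod_decode n)) (snd (prod_decode n)))"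

definition acceptable :: "(nat \<Rightarrow> nat \<Rightarrow> nat option) \<Rightarrow> bool" where
  "acceptable \<phi> \<longleftrightarrow> computable_numbering \<phi> \<and>
     (\<forall>\<psi>. computable_numbering \<psi> \<longrightarrow>
        (\<exists>t. computable (\<lambda>x. Some (t x)) \<and> (\<forall>e. \<psi> e = \<phi> (t e))))"

definition W :: "(nat \<Rightarrow> nat \<Rightarrow> nat option) \<Rightarrow> nat \<Rightarrow> nat set" where
  "W \<phi> e = dom (\<phi> e)"

text \<open>A text is a total function nat => nat option; None plays the role of the pause symbol #.\<close>
type_synonym txtT = "nat \<Rightarrow> nat option"

definition content :: "txtT \<Rightarrow> nat set" where
  "content T = {x. \<exists>i. T i = Some x}"

definition content_init :: "txtT \<Rightarrow> nat \<Rightarrow> nat set" where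
  "content_init T n = {x. \<exists>i<n. T i = Some x}"

definition init_seg :: "txtT \<Rightarrow> nat \<Rightarrow> nat option list" where
  "init_seg T n = map T [0..<n]"

definition seq_code :: "nat option list \<Rightarrow> nat" where
  "seq_code xs = list_encode (map (\<lambda>c. case c of None \<Rightarrow> 0 | Some n \<Rightarrow> Suc n) xs)"

definition G_op :: "(nat \<Rightarrow> nat option) \<Rightarrow> txtT \<Rightarrow> nat \<Rightarrow> nat option" where
  "G_op h T i = h (seq_code (init_seg T i))"

definition Psd_op :: "(nat \<Rightarrow> nat option) \<Rightarrow> txtT \<Rightarrow> nat \<Rightarrow> nat option" where
  "Psd_op h T i = h (prod_encode (set_encode (content_init T i), i))"

definition Sd_op :: "(nat \<Rightarrow> nat option) \<Rightarrow> txtT \<Rightarrow> nat \<Rightarrow> nat option" where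
  "Sd_op h T i = h (set_encode (content_init T i))"

definition Bc :: "(nat \<Rightarrow> nat \<Rightarrow> nat option) \<Rightarrow> (nat \<Rightarrow> nat) \<Rightarrow> txtT \<Rightarrow> bool" where
  "Bc \<phi> p T \<longleftrightarrow> (\<exists>n0. \<forall>n\<ge>n0. W \<phi> (p n) = content T)"

definition SemWb :: "(nat \<Rightarrow> nat \<Rightarrow> nat option) \<Rightarrow> (nat \<Rightarrow> nat) \<Rightarrow> txtT \<Rightarrow> bool" where
  "SemWb \<phi> p T \<longleftrightarrow> (\<forall>n m. (\<exists>k. n \<le> k \<and> k \<le> m \<and> W \<phi> (p n) \<noteq> W \<phi> (p k)) \<longrightarrow>
       (content_init T m \<inter> W \<phi> (p m)) - W \<phi> (p n) \<noteq> {})"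

definition SemConv :: "(nat \<Rightarrow> nat \<Rightarrow> nat option) \<Rightarrow> (nat \<Rightarrow> nat) \<Rightarrow> txtT \<Rightarrow> bool" where
  "SemConv \<phi> p T \<longleftrightarrow> (\<forall>n m. n < m \<and> content_init T m \<subseteq> W \<phi> (p n) \<longrightarrow>
       W \<phi> (p n) = W \<phi> (p m))"

definition learns ::
  "(nat \<Rightarrow> nat \<Rightarrow> nat option) \<Rightarrow>
   ((nat \<Rightarrow> nat \<Rightarrow> nat option) \<Rightarrow> (nat \<Rightarrow> nat) \<Rightarrow> txtT \<Rightarrow> bool) \<Rightarrow>
   ((nat \<Rightarrow> nat option) \<Rightarrow> txtT \<Rightarrow> nat \<Rightarrow> nat option) \<Rightarrow>
   (nat \<Rightarrow> nat option) \<Rightarrow> nat set \<Rightarrow> bool" where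
  "learns \<phi> \<alpha> \<beta> h L \<longleftrightarrow>
     (\<forall>T::txtT. (\<forall>i. \<beta> h T i \<noteq> None) \<and> \<alpha> \<phi> (\<lambda>i. the (\<beta> h T i)) T) \<and>
     (\<forall>T::txtT. content T = L \<longrightarrow> Bc \<phi> (\<lambda>i. the (\<beta> h T i)) T)"

definition TxtBc ::
  "(nat \<Rightarrow> nat \<Rightarrow> nat option) \<Rightarrow>
   ((nat \<Rightarrow> nat \<Rightarrow> nat option) \<Rightarrow> (nat \<Rightarrow> nat) \<Rightarrow> txtT \<Rightarrow> bool) \<Rightarrow>
   ((nat \<Rightarrow> nat option) \<Rightarrow> txtT \<Rightarrow> nat \<Rightarrow> nat option) \<Rightarrow> nat set set set" where
  "TxtBc \<phi> \<alpha> \<beta> = {\<L>. \<exists>h. computable h \<and> (\<forall>L\<in>\<L>. learns \<phi> \<alpha> \<beta> h L)}"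

end

theory Submission
  imports Defs
begin

text \<open>Let \<open>h\<close> be a semantically conservative learner. The new learner conjectures, on data
  \<open>D\<close> for which \<open>h\<close> conjectures \<open>e\<close>, the set \<open>D \<union> W e\<close> if \<open>D \<subseteq> W e\<close>, and \<open>D\<close> otherwise. As \<open>h\<close> is
  computable, this set is r.e. uniformly in a finite code of the data, so an acceptable numbering
  has a computable index function for it. Its conjectures always contain the data, which turns semantic
  conservativeness into semantic witness-based learning, and the consistency test preserves
  behaviourally correct learning. Conservativeness transfers from \<open>h\<close> as long as the old
  conjecture depends only on the content seen: a set-driven learner has this property, a partially
  set-driven learner is queried at time \<open>card D\<close> as if \<open>D\<close> had been presented without
  repetitions, and a full-text learner is queried on the shortest prefix with the current content.\<close>

section \<open>Total recursive functions\<close>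

inductive_cases eval_ZE: "eval Z xs y"
inductive_cases eval_SE: "eval S xs y"
inductive_cases eval_IdE: "eval (Id i) xs y"
inductive_cases eval_CnE: "eval (Cn f gs) xs y"
inductive_cases eval_PrE: "eval (Pr f g) xs y"
inductive_cases eval_MnE: "eval (Mn f) xs y"

lemma eval_det: "eval r xs y \<Longrightarrow> eval r xs y' \<Longrightarrow> y = y'"
proof (induction arbitrary: y' rule: eval.induct)
  case (eval_Z xs)
  then show ?case by (rule eval_ZE) simp
next
  case (eval_S x xs)
  then show ?case by (rule eval_SE) simp
next
  case (eval_Id i xs)
  from eval_Id.prems show ?case by (rule eval_IdE) simp
next
  case (eval_Cn zs gs xs f y)
  from eval_Cn.prems obtain zs' where zs': "length zs' = length gs"
    "\<forall>i<length gs. eval (gs ! i) xs (zs' ! i)" "eval f zs' y'" by (rule eval_CnE) blast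
  have "zs = zs'"
    using eval_Cn(1,3) zs'(1,2) by (intro nth_equalityI) simp_all
  then show ?case using eval_Cn.IH(2) zs'(3) by blast
next
  case (eval_Pr0 f xs y g)
  from eval_Pr0.prems have "eval f xs y'" by (rule eval_PrE) auto
  then show ?case using eval_Pr0.IH by blast
next
  case (eval_PrS f g x xs z y)
  from eval_PrS.prems obtain z' where "eval (Pr f g) (x # xs) z'" "eval g (x # z' # xs) y'"
    by (rule eval_PrE) auto
  then show ?case using eval_PrS.IH by blast
next
  case (eval_Mn f x xs)
  from eval_Mn.prems have y': "eval f (y' # xs) 0 \<and> (\<forall>y<y'. \<exists>z. z \<noteq> 0 \<and> eval f (y # xs) z)"
    by (rule eval_MnE) blast
  show ?case
  proof (rule linorder_cases[of x y'])
    assume "x < y'"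
    then obtain z where "z \<noteq> 0" "eval f (x # xs) z" using y' by blast
    then show ?thesis using eval_Mn.IH(1) by fastforce
  next
    assume "y' < x"
    then obtain z where "z \<noteq> 0" "\<forall>w. eval f (y' # xs) w \<longrightarrow> z = w" using eval_Mn.IH(2) by blast
    then show ?thesis using y' by blast
  qed
qed

definition computes :: "recf \<Rightarrow> nat \<Rightarrow> (nat list \<Rightarrow> nat) \<Rightarrow> bool" where
  "computes r k f \<longleftrightarrow> (\<forall>xs. length xs = k \<longrightarrow> eval r xs (f xs))"

definition recfn :: "nat \<Rightarrow> (nat list \<Rightarrow> nat) \<Rightarrow> bool" where
  "recfn k f \<longleftrightarrow> (\<exists>r. computes r k f)"

abbreviation recpred :: "nat \<Rightarrow> (nat list \<Rightarrow> bool) \<Rightarrow> bool" where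
  "recpred k P \<equiv> recfn k (\<lambda>xs. of_bool (P xs))"

lemma recfn_cong: "recfn k f \<Longrightarrow> (\<And>xs. length xs = k \<Longrightarrow> f xs = g xs) \<Longrightarrow> recfn k g"
  unfolding recfn_def computes_def by metis

lemma recfn_zero: "recfn k (\<lambda>_. 0)"
  unfolding recfn_def computes_def by (auto intro: eval_Z)

lemma recfn_proj: "i < k \<Longrightarrow> recfn k (\<lambda>xs. xs ! i)"
  unfolding recfn_def computes_def by (auto intro: eval_Id)

lemma recfn_Suc_proj: "recfn (Suc 0) (\<lambda>xs. Suc (xs ! 0))"
  unfolding recfn_def computes_def
  by (rule exI[of _ S]) (auto simp: length_Suc_conv intro: eval_S)

lemma eval_Cn_computes:
  assumes "length gs = length Gs" "\<forall>i<length gs. computes (gs ! i) k (Gs ! i)" "length xs = k"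
  shows "eval (Cn f gs) xs y \<longleftrightarrow> eval f (map (\<lambda>G. G xs) Gs) y"
proof
  assume "eval (Cn f gs) xs y"
  then obtain zs where zs: "length zs = length gs" "\<forall>i<length gs. eval (gs ! i) xs (zs ! i)"
    "eval f zs y" by (rule eval_CnE) blast
  have "zs = map (\<lambda>G. G xs) Gs"
    using assms zs(1,2) eval_det unfolding computes_def by (auto intro!: nth_equalityI)
  then show "eval f (map (\<lambda>G. G xs) Gs) y" using zs(3) by simp
next
  assume "eval f (map (\<lambda>G. G xs) Gs) y"
  then show "eval (Cn f gs) xs y"
    using assms unfolding computes_def by (intro eval_Cn) auto
qed

lemma recfn_programs:
  "\<forall>G\<in>set Gs. recfn k G \<Longrightarrow> \<exists>gs. length gs = length Gs \<and> (\<forall>i<length Gs. computes (gs ! i) k (Gs ! i))"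
proof (induction Gs)
  case Nil
  then show ?case by simp
next
  case (Cons G Gs)
  then obtain gs g where "length gs = length Gs" "\<forall>i<length Gs. computes (gs ! i) k (Gs ! i)"
    "computes g k G"
    unfolding recfn_def by auto
  then show ?case by (intro exI[of _ "g # gs"]) (auto simp: nth_Cons split: nat.splits)
qed

lemma recfn_comp:
  assumes "recfn (length Gs) F" "\<forall>G\<in>set Gs. recfn k G"
  shows "recfn k (\<lambda>xs. F (map (\<lambda>G. G xs) Gs))"
proof -
  obtain f where f: "computes f (length Gs) F" using assms(1) unfolding recfn_def by blast
  obtain gs where gs: "length gs = length Gs" "\<forall>i<length Gs. computes (gs ! i) k (Gs ! i)"
    using recfn_programs[OF assms(2)] by blast
  have "computes (Cn f gs) k (\<lambda>xs. F (map (\<lambda>G. G xs) Gs))"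
    using f gs eval_Cn_computes[of gs Gs k] unfolding computes_def by simp
  then show ?thesis unfolding recfn_def by blast
qed

lemma recfn_lift1:
  "recfn (Suc 0) F \<Longrightarrow> (\<And>a. F [a] = H a) \<Longrightarrow> recfn k f \<Longrightarrow> recfn k (\<lambda>xs. H (f xs))"
  using recfn_comp[of "[f]" F k] by simp

lemma recfn_lift2:
  "recfn (Suc (Suc 0)) F \<Longrightarrow> (\<And>a b. F [a, b] = H a b) \<Longrightarrow> recfn k f \<Longrightarrow> recfn k g \<Longrightarrow>
    recfn k (\<lambda>xs. H (f xs) (g xs))"
  using recfn_comp[of "[f, g]" F k] by simp

lemma recfn_Suc: "recfn k f \<Longrightarrow> recfn k (\<lambda>xs. Suc (f xs))"
  by (rule recfn_lift1[OF recfn_Suc_proj]) simp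

lemma recfn_const: "recfn k (\<lambda>_. c)"
  by (induction c) (auto intro: recfn_zero dest: recfn_Suc)

lemma map_Cons_proj: "length xs = k \<Longrightarrow> map (\<lambda>G. G xs) (N # map (\<lambda>j xs. xs ! j) [0..<k]) = N xs # xs"
  by (auto intro: nth_equalityI)

lemma map_nth_Suc_eq_tl: "length ys = Suc k \<Longrightarrow> map (\<lambda>i. ys ! Suc i) [0..<k] = tl ys"
  by (auto intro: nth_equalityI simp: nth_tl)

lemma map_nth_skip1_eq:
  "length zs = Suc (Suc k) \<Longrightarrow> map (\<lambda>i. zs ! (if i = 0 then 0 else Suc i)) [0..<Suc k] = zs ! 0 # drop 2 zs"
  by (intro nth_equalityI) (auto simp del: upt_Suc simp: nth_Cons split: nat.splits)

lemma recfn_Cons_arg: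
  assumes "recfn (Suc k) F" "recfn k N"
  shows "recfn k (\<lambda>xs. F (N xs # xs))"
proof (rule recfn_cong)
  show "recfn k (\<lambda>xs. F (map (\<lambda>G. G xs) (N # map (\<lambda>j xs. xs ! j) [0..<k])))"
    by (rule recfn_comp) (use assms in \<open>auto intro: recfn_proj\<close>)
qed (simp only: map_Cons_proj)

lemma recfn_reindex:
  assumes "recfn m F" "\<And>i. i < m \<Longrightarrow> \<sigma> i < k"
  shows "recfn k (\<lambda>xs. F (map (\<lambda>i. xs ! \<sigma> i) [0..<m]))"
  using recfn_comp[of "map (\<lambda>i xs. xs ! \<sigma> i) [0..<m]" F k] assms
  by (simp add: recfn_proj comp_def)

lemma recfn_tl_arg:
  assumes "recfn k f"
  shows "recfn (Suc k) (\<lambda>ys. f (tl ys))"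
proof (rule recfn_cong)
  show "recfn (Suc k) (\<lambda>ys. f (map (\<lambda>i. ys ! Suc i) [0..<k]))"
    using assms by (rule recfn_reindex) simp
qed (simp only: map_nth_Suc_eq_tl)

lemma recfn_skip_arg1:
  assumes "recfn (Suc k) Q"
  shows "recfn (Suc (Suc k)) (\<lambda>zs. Q (zs ! 0 # drop 2 zs))"
proof (rule recfn_cong)
  show "recfn (Suc (Suc k)) (\<lambda>zs. Q (map (\<lambda>i. zs ! (if i = 0 then 0 else Suc i)) [0..<Suc k]))"
    using assms by (rule recfn_reindex) simp
qed (simp only: map_nth_skip1_eq)

lemma recfn_rec:
  assumes F: "recfn k F" and G: "recfn (Suc (Suc k)) G"
    and f0: "\<And>ys. length ys = k \<Longrightarrow> f 0 ys = F ys"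
    and fS: "\<And>n ys. length ys = k \<Longrightarrow> f (Suc n) ys = G (n # f n ys # ys)"
  shows "recfn (Suc k) (\<lambda>xs. f (hd xs) (tl xs))"
proof -
  obtain rF rG where rF: "computes rF k F" and rG: "computes rG (Suc (Suc k)) G"
    using F G unfolding recfn_def by blast
  have "eval (Pr rF rG) (n # ys) (f n ys)" if "length ys = k" for n ys
  proof (induction n)
    case 0
    then show ?case using rF that unfolding computes_def by (auto simp: f0[OF that] intro: eval_Pr0)
  next
    case (Suc n)
    then show ?case using rG that unfolding computes_def by (auto simp: fS[OF that] intro: eval_PrS)
  qed
  then have "computes (Pr rF rG) (Suc k) (\<lambda>xs. f (hd xs) (tl xs))"
    unfolding computes_def by (auto simp: length_Suc_conv)
  then show ?thesis unfolding recfn_def by blast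
qed

lemma recfn_rec_at:
  assumes "recfn k F" "recfn (Suc (Suc k)) G"
    and "\<And>ys. length ys = k \<Longrightarrow> f 0 ys = F ys"
    and "\<And>n ys. length ys = k \<Longrightarrow> f (Suc n) ys = G (n # f n ys # ys)" and "recfn k N"
  shows "recfn k (\<lambda>xs. f (N xs) xs)"
  using recfn_Cons_arg[OF recfn_rec[OF assms(1-4)] assms(5)] by simp

lemma recfn_unary_rec:
  assumes G: "recfn (Suc (Suc 0)) G" and step: "\<And>n. op (Suc n) = G [n, op n]"
    and f: "recfn k f"
  shows "recfn k (\<lambda>xs. op (f xs))"
proof -
  have "recfn (Suc 0) (\<lambda>xs. (\<lambda>n ys. op n) (hd xs) (tl xs))"
    by (rule recfn_rec[OF recfn_const G]) (simp_all add: step)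
  then have "recfn (Suc 0) (\<lambda>xs. op (xs ! 0))"
    by (rule recfn_cong) (auto simp: length_Suc_conv)
  then show ?thesis by (rule recfn_lift1[OF _ _ f]) simp
qed

lemma recfn_binary_rec:
  assumes F: "recfn (Suc 0) F" and G: "recfn (Suc (Suc (Suc 0))) G"
    and base: "\<And>b. op 0 b = F [b]" and step: "\<And>n b. op (Suc n) b = G [n, op n b, b]"
    and f: "recfn k f" and g: "recfn k g"
  shows "recfn k (\<lambda>xs. op (f xs) (g xs))"
proof -
  have "recfn (Suc (Suc 0)) (\<lambda>xs. (\<lambda>n ys. op n (ys ! 0)) (hd xs) (tl xs))"
    by (rule recfn_rec[OF F G]) (auto simp: base step length_Suc_conv)
  then have "recfn (Suc (Suc 0)) (\<lambda>xs. op (xs ! 0) (xs ! 1))"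
    by (rule recfn_cong) (auto simp: length_Suc_conv)
  then show ?thesis by (rule recfn_lift2[OF _ _ f g]) simp
qed

lemma recfn_add: "recfn k f \<Longrightarrow> recfn k g \<Longrightarrow> recfn k (\<lambda>xs. f xs + g xs)"
  by (rule recfn_binary_rec[where op="(+)" and F="\<lambda>ys. ys ! 0" and G="\<lambda>zs. Suc (zs ! 1)"])
    (simp_all add: recfn_proj recfn_Suc)

lemma recfn_pred: "recfn k f \<Longrightarrow> recfn k (\<lambda>xs. f xs - 1)"
  by (rule recfn_unary_rec[where op="\<lambda>n. n - 1" and G="\<lambda>zs. zs ! 0"]) (simp_all add: recfn_proj)

lemma recfn_diff: "recfn k f \<Longrightarrow> recfn k g \<Longrightarrow> recfn k (\<lambda>xs. f xs - g xs)"
proof -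
  have "recfn (Suc (Suc (Suc 0))) (\<lambda>zs. zs ! 1 - 1)" by (rule recfn_pred[OF recfn_proj]) simp
  then show "recfn k f \<Longrightarrow> recfn k g \<Longrightarrow> recfn k (\<lambda>xs. f xs - g xs)"
    by (intro recfn_binary_rec[where op="\<lambda>n b. b - n" and f=g and g=f and F="\<lambda>ys. ys ! 0"
          and G="\<lambda>zs. zs ! 1 - 1"])
      (simp_all add: recfn_proj)
qed

lemma recfn_mult: "recfn k f \<Longrightarrow> recfn k g \<Longrightarrow> recfn k (\<lambda>xs. f xs * g xs)"
  by (rule recfn_binary_rec[where op="(*)" and F="\<lambda>_. 0" and G="\<lambda>zs. zs ! 2 + zs ! 1"])
    (simp_all add: recfn_proj recfn_add recfn_const)

lemma recfn_pow2: "recfn k f \<Longrightarrow> recfn k (\<lambda>xs. 2 ^ f xs)"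
  by (rule recfn_unary_rec[where op="\<lambda>n. 2 ^ n" and G="\<lambda>zs. zs ! 1 + zs ! 1"])
    (simp_all add: recfn_proj recfn_add)

lemma recfn_triangle: "recfn k f \<Longrightarrow> recfn k (\<lambda>xs. triangle (f xs))"
  by (rule recfn_unary_rec[where op=triangle and G="\<lambda>zs. zs ! 1 + Suc (zs ! 0)"])
    (simp_all add: recfn_proj recfn_add recfn_Suc)

lemma recpred_le: "recfn k f \<Longrightarrow> recfn k g \<Longrightarrow> recpred k (\<lambda>xs. f xs \<le> g xs)"
proof -
  assume "recfn k f" "recfn k g"
  then have "recfn k (\<lambda>xs. 1 - (f xs - g xs))" by (intro recfn_diff recfn_const)
  then show ?thesis by (rule recfn_cong) auto
qed

lemma recpred_less: "recfn k f \<Longrightarrow> recfn k g \<Longrightarrow> recpred k (\<lambda>xs. f xs < g xs)"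
proof -
  assume "recfn k f" "recfn k g"
  then have "recpred k (\<lambda>xs. Suc (f xs) \<le> g xs)" by (intro recpred_le recfn_Suc)
  then show ?thesis by (rule recfn_cong) auto
qed

lemma recpred_eq: "recfn k f \<Longrightarrow> recfn k g \<Longrightarrow> recpred k (\<lambda>xs. f xs = g xs)"
proof -
  assume "recfn k f" "recfn k g"
  then have "recfn k (\<lambda>xs. 1 - ((f xs - g xs) + (g xs - f xs)))" by (intro recfn_diff recfn_add recfn_const)
  then show ?thesis by (rule recfn_cong) auto
qed

lemma recpred_not: "recpred k P \<Longrightarrow> recpred k (\<lambda>xs. \<not> P xs)"
proof -
  assume "recpred k P"
  then have "recfn k (\<lambda>xs. 1 - of_bool (P xs))" by (intro recfn_diff recfn_const)
  then show ?thesis by (rule recfn_cong) auto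
qed

lemma recpred_conj: "recpred k P \<Longrightarrow> recpred k Q \<Longrightarrow> recpred k (\<lambda>xs. P xs \<and> Q xs)"
proof -
  assume "recpred k P" "recpred k Q"
  then have "recfn k (\<lambda>xs. of_bool (P xs) * of_bool (Q xs))" by (intro recfn_mult)
  then show ?thesis by (rule recfn_cong) auto
qed

lemma recpred_disj: "recpred k P \<Longrightarrow> recpred k Q \<Longrightarrow> recpred k (\<lambda>xs. P xs \<or> Q xs)"
proof -
  assume "recpred k P" "recpred k Q"
  then have "recpred k (\<lambda>xs. \<not> (\<not> P xs \<and> \<not> Q xs))" by (intro recpred_not recpred_conj)
  then show ?thesis by (rule recfn_cong) auto
qed

lemma recpred_imp: "recpred k P \<Longrightarrow> recpred k Q \<Longrightarrow> recpred k (\<lambda>xs. P xs \<longrightarrow> Q xs)"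
proof -
  assume "recpred k P" "recpred k Q"
  then have "recpred k (\<lambda>xs. \<not> P xs \<or> Q xs)" by (intro recpred_not recpred_disj)
  then show ?thesis by (rule recfn_cong) auto
qed

lemma recfn_If: "recpred k P \<Longrightarrow> recfn k f \<Longrightarrow> recfn k g \<Longrightarrow> recfn k (\<lambda>xs. if P xs then f xs else g xs)"
proof -
  assume "recpred k P" "recfn k f" "recfn k g"
  then have "recfn k (\<lambda>xs. of_bool (P xs) * f xs + (1 - of_bool (P xs)) * g xs)"
    by (intro recfn_add recfn_mult recfn_diff recfn_const)
  then show ?thesis by (rule recfn_cong) auto
qed

lemma recfn_sum: "recfn (Suc k) Q \<Longrightarrow> recfn k N \<Longrightarrow> recfn k (\<lambda>xs. \<Sum>i<N xs. Q (i # xs))"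
proof -
  assume Q: "recfn (Suc k) Q" and N: "recfn k N"
  show ?thesis
    by (rule recfn_rec_at[where f="\<lambda>n ys. \<Sum>i<n. Q (i # ys)" and F="\<lambda>_. 0"
          and G="\<lambda>zs. zs ! 1 + Q (zs ! 0 # drop 2 zs)"])
      (auto intro: recfn_const recfn_add recfn_proj recfn_skip_arg1[OF Q] N)
qed

declare sum_of_bool_eq[simp del]

lemma sum_of_bool_pos_iff: "(0::nat) < (\<Sum>i<(n::nat). of_bool (P i)) \<longleftrightarrow> (\<exists>i<n. P i)"
  by (induction n) (auto simp: less_Suc_eq)

lemma recpred_ex_less: "recpred (Suc k) P \<Longrightarrow> recfn k N \<Longrightarrow> recpred k (\<lambda>xs. \<exists>i<N xs. P (i # xs))"
proof -
  assume "recpred (Suc k) P" "recfn k N"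
  then have "recfn k (\<lambda>xs. 1 - (1 - (\<Sum>i<N xs. of_bool (P (i # xs)))))"
    by (intro recfn_diff recfn_const recfn_sum)
  moreover have "1 - (1 - s) = of_bool (s \<noteq> 0)" for s :: nat by simp
  ultimately show ?thesis by (simp add: sum_of_bool_pos_iff)
qed

lemma recpred_all_less: "recpred (Suc k) P \<Longrightarrow> recfn k N \<Longrightarrow> recpred k (\<lambda>xs. \<forall>i<N xs. P (i # xs))"
proof -
  assume "recpred (Suc k) P" "recfn k N"
  then have "recpred k (\<lambda>xs. \<not> (\<exists>i<N xs. \<not> P (i # xs)))"
    by (intro recpred_not recpred_ex_less)
  then show ?thesis by (rule recfn_cong) auto
qed

definition bounded_Least :: "nat \<Rightarrow> (nat \<Rightarrow> bool) \<Rightarrow> nat" where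
  "bounded_Least n P = (if \<exists>i<n. P i then LEAST i. P i else n)"

lemma bounded_Least_eq_sum: "bounded_Least n P = (\<Sum>j<n. of_bool (\<not> (\<exists>i<Suc j. P i)))"
proof (induction n)
  case 0
  then show ?case by (simp add: bounded_Least_def)
next
  case (Suc n)
  show ?case
  proof (cases "\<exists>i<n. P i")
    case True
    then have "bounded_Least (Suc n) P = bounded_Least n P" by (auto simp: bounded_Least_def)
    moreover have "\<exists>i<Suc n. P i" using True less_SucI by blast
    ultimately show ?thesis using Suc by simp
  next
    case False
    then have bn: "bounded_Least n P = n" by (auto simp: bounded_Least_def)
    show ?thesis
    proof (cases "P n")
      case True
      then have "(LEAST i. P i) = n" using False
        by (metis (mono_tags, lifting) Least_equality not_le)
      then have "bounded_Least (Suc n) P = n" using True by (auto simp: bounded_Least_def intro: exI[of _ n])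
      moreover have "\<exists>i<Suc n. P i" using True by blast
      ultimately show ?thesis using Suc bn by simp
    next
      case F2: False
      then have "\<not> (\<exists>i<Suc n. P i)" using False less_Suc_eq by auto
      then have "bounded_Least (Suc n) P = Suc n" unfolding bounded_Least_def by (rule if_not_P)
      then show ?thesis using Suc bn F2 False less_Suc_eq by auto
    qed
  qed
qed

lemma recfn_bounded_Least: "recpred (Suc k) P \<Longrightarrow> recfn k N \<Longrightarrow> recfn k (\<lambda>xs. bounded_Least (N xs) (\<lambda>i. P (i # xs)))"
proof -
  assume P: "recpred (Suc k) P" and N: "recfn k N"
  have P2: "recpred (Suc (Suc k)) (\<lambda>zs. P (zs ! 0 # drop 2 zs))"
    using recfn_skip_arg1[OF P] by simp
  have F1: "recpred (Suc k) (\<lambda>ys. \<exists>i<Suc (ys ! 0). (\<lambda>zs. P (zs ! 0 # drop 2 zs)) (i # ys))"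
    by (rule recpred_ex_less[OF P2 recfn_Suc[OF recfn_proj]]) simp
  have "recpred (Suc k) (\<lambda>ys. \<exists>i<Suc (ys ! 0). P (i # tl ys))"
    by (rule recfn_cong[OF F1]) (simp add: drop_Suc)
  then have "recpred (Suc k) (\<lambda>ys. \<not> (\<exists>i<Suc (ys ! 0). P (i # tl ys)))"
    by (rule recpred_not)
  then have "recfn k (\<lambda>xs. \<Sum>j<N xs. of_bool (\<not> (\<exists>i<Suc ((j # xs) ! 0). P (i # tl (j # xs)))))"
    by (intro recfn_sum N)
  then show ?thesis by (rule recfn_cong) (simp add: bounded_Least_eq_sum)
qed

lemma sum_div: "0 < b \<Longrightarrow> (\<Sum>q<n. of_bool (Suc q * b \<le> a)) = min n (a div b)"
proof (induction n)
  case 0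
  then show ?case by simp
next
  case (Suc n)
  have "Suc n * b \<le> a \<longleftrightarrow> Suc n \<le> a div b" using Suc.prems
    by (simp add: less_eq_div_iff_mult_less_eq)
  then show ?case using Suc by auto
qed

lemma recfn_div: "recfn k f \<Longrightarrow> recfn k g \<Longrightarrow> recfn k (\<lambda>xs. f xs div g xs)"
proof -
  assume f: "recfn k f" and g: "recfn k g"
  have tf: "recfn (Suc k) (\<lambda>ys. f (tl ys))" by (rule recfn_tl_arg[OF f])
  have tg: "recfn (Suc k) (\<lambda>ys. g (tl ys))" by (rule recfn_tl_arg[OF g])
  have Q: "recpred (Suc k) (\<lambda>ys. Suc (ys ! 0) * g (tl ys) \<le> f (tl ys))"
    by (rule recpred_le[OF recfn_mult[OF recfn_Suc[OF recfn_proj] tg] tf]) simp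
  have S: "recfn k (\<lambda>xs. \<Sum>q<f xs. (\<lambda>ys. of_bool (Suc (ys ! 0) * g (tl ys) \<le> f (tl ys))) (q # xs))"
    by (rule recfn_sum[OF Q f])
  have "recfn k (\<lambda>xs. of_bool (\<not> g xs = 0) * (\<Sum>q<f xs. (\<lambda>ys. of_bool (Suc (ys ! 0) * g (tl ys) \<le> f (tl ys))) (q # xs)))"
    by (rule recfn_mult[OF recpred_not[OF recpred_eq[OF g recfn_const]] S])
  then show ?thesis
  proof (rule recfn_cong)
    fix xs :: "nat list"
    show "of_bool (\<not> g xs = 0) * (\<Sum>q<f xs. (\<lambda>ys. of_bool (Suc (ys ! 0) * g (tl ys) \<le> f (tl ys))) (q # xs)) = f xs div g xs"
      by (cases "g xs = 0") (simp_all add: sum_div[simplified] min_def div_le_dividend antisym)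
  qed
qed

lemma recpred_odd: "recfn k f \<Longrightarrow> recpred k (\<lambda>xs. odd (f xs))"
proof -
  assume f: "recfn k f"
  then have "recfn k (\<lambda>xs. f xs - f xs div 2 * 2)" by (intro recfn_diff recfn_mult recfn_div recfn_const)
  then show ?thesis by (rule recfn_cong) (simp add: minus_div_mult_eq_mod odd_iff_mod_2_eq_one)
qed

lemma triangle_mono: "a \<le> b \<Longrightarrow> triangle a \<le> triangle b"
  by (induction b) (auto simp: le_Suc_eq)

lemma triangle_ge: "a \<le> triangle a"
  by (induction a) auto

lemma sum_less_min: "(\<Sum>s<n. of_bool (s < m)) = min n (m::nat)"
  by (induction n) auto

lemma prod_decode_eq_sum:
  fixes n :: nat
  defines "K \<equiv> \<Sum>s<n. of_bool (triangle (Suc s) \<le> n)"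
  shows "prod_decode n = (n - triangle K, K - (n - triangle K))"
proof -
  obtain a b where ab: "prod_decode n = (a, b)" by (cases "prod_decode n")
  have "n = prod_encode (a, b)" using prod_decode_inverse[of n] ab by simp
  then have n: "n = triangle (a + b) + a" by (simp add: prod_encode_def)
  have iff: "triangle (Suc s) \<le> n \<longleftrightarrow> s < a + b" for s
  proof
    assume A: "triangle (Suc s) \<le> n"
    show "s < a + b"
    proof (rule ccontr)
      assume "\<not> s < a + b"
      then have "triangle (Suc (a + b)) \<le> triangle (Suc s)" by (intro triangle_mono) simp
      moreover have "triangle (Suc (a + b)) > n" using n by simp
      ultimately show False using A by linarith
    qed
  next
    assume "s < a + b"
    then have "triangle (Suc s) \<le> triangle (a + b)" by (intro triangle_mono) simp
    then show "triangle (Suc s) \<le> n" using n by linarith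
  qed
  have le: "a + b \<le> n" using n triangle_ge[of "a+b"] by linarith
  have "K = (\<Sum>s<n. of_bool (s < a + b))" unfolding K_def iff ..
  also have "\<dots> = a + b" using le by (simp add: sum_less_min min_def)
  finally have K: "K = a + b" .
  show ?thesis using ab n K by simp
qed

lemma recfn_prod_decode_sum: "recfn k f \<Longrightarrow> recfn k (\<lambda>xs. \<Sum>s<f xs. of_bool (triangle (Suc s) \<le> f xs))"
proof -
  assume f: "recfn k f"
  have tf: "recfn (Suc k) (\<lambda>ys. f (tl ys))" by (rule recfn_tl_arg[OF f])
  have Q: "recpred (Suc k) (\<lambda>ys. triangle (Suc (ys ! 0)) \<le> f (tl ys))"
    by (rule recpred_le[OF recfn_triangle[OF recfn_Suc[OF recfn_proj]] tf]) simp
  have "recfn k (\<lambda>xs. \<Sum>s<f xs. (\<lambda>ys. of_bool (triangle (Suc (ys ! 0)) \<le> f (tl ys))) (s # xs))"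
    by (rule recfn_sum[OF Q f])
  then show ?thesis by (rule recfn_cong) simp
qed

lemma recfn_fst_prod_decode: "recfn k f \<Longrightarrow> recfn k (\<lambda>xs. fst (prod_decode (f xs)))"
proof -
  assume f: "recfn k f"
  have "recfn k (\<lambda>xs. f xs - triangle (\<Sum>s<f xs. of_bool (triangle (Suc s) \<le> f xs)))"
    by (rule recfn_diff[OF f recfn_triangle[OF recfn_prod_decode_sum[OF f]]])
  then show ?thesis by (rule recfn_cong) (subst prod_decode_eq_sum, simp)
qed

lemma recfn_snd_prod_decode: "recfn k f \<Longrightarrow> recfn k (\<lambda>xs. snd (prod_decode (f xs)))"
proof -
  assume f: "recfn k f"
  have "recfn k (\<lambda>xs. (\<Sum>s<f xs. of_bool (triangle (Suc s) \<le> f xs)) - (f xs - triangle (\<Sum>s<f xs. of_bool (triangle (Suc s) \<le> f xs))))"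
    by (rule recfn_diff[OF recfn_prod_decode_sum[OF f] recfn_diff[OF f recfn_triangle[OF recfn_prod_decode_sum[OF f]]]])
  then show ?thesis by (rule recfn_cong) (subst prod_decode_eq_sum, simp)
qed

lemma recfn_prod_encode: "recfn k f \<Longrightarrow> recfn k g \<Longrightarrow> recfn k (\<lambda>xs. prod_encode (f xs, g xs))"
proof -
  assume "recfn k f" "recfn k g"
  then have "recfn k (\<lambda>xs. triangle (f xs + g xs) + f xs)" by (intro recfn_add recfn_triangle)
  then show ?thesis by (rule recfn_cong) (simp add: prod_encode_def)
qed

lemma set_decode_mem: "x \<in> set_decode s \<longleftrightarrow> odd (s div 2 ^ x)"
  by (simp add: set_decode_def)

lemma recpred_mem_set_decode: "recfn k f \<Longrightarrow> recfn k g \<Longrightarrow> recpred k (\<lambda>xs. g xs \<in> set_decode (f xs))"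
proof -
  assume f: "recfn k f" and g: "recfn k g"
  have "recpred k (\<lambda>xs. odd (f xs div 2 ^ g xs))" by (rule recpred_odd[OF recfn_div[OF f recfn_pow2[OF g]]])
  then show ?thesis by (rule recfn_cong) (simp add: set_decode_mem)
qed

lemma set_decode_less: "x \<in> set_decode s \<Longrightarrow> x < s"
proof -
  assume "x \<in> set_decode s"
  then have "odd (s div 2 ^ x)" by (simp add: set_decode_mem)
  then have "s div 2 ^ x \<noteq> 0" by (metis even_zero)
  then have "2 ^ x \<le> s" by (simp add: div_eq_0_iff) 
  moreover have "x < 2 ^ x" by simp
  ultimately show ?thesis by linarith
qed

lemma card_set_decode: "card (set_decode s) = (\<Sum>y<s. of_bool (y \<in> set_decode s))"
proof -
  have "(\<Sum>y<s. of_bool (y \<in> set_decode s)) = card ({..<s} \<inter> {y. y \<in> set_decode s})"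
    by (simp add: sum_of_bool_eq)
  also have "{..<s} \<inter> {y. y \<in> set_decode s} = set_decode s" using set_decode_less by auto
  finally show ?thesis by simp
qed

lemma recfn_card_set_decode: "recfn k f \<Longrightarrow> recfn k (\<lambda>xs. card (set_decode (f xs)))"
proof -
  assume f: "recfn k f"
  have Q: "recpred (Suc k) (\<lambda>ys. ys ! 0 \<in> set_decode (f (tl ys)))"
    by (rule recpred_mem_set_decode[OF recfn_tl_arg[OF f] recfn_proj]) simp
  have "recfn k (\<lambda>xs. \<Sum>y<f xs. (\<lambda>ys. of_bool (ys ! 0 \<in> set_decode (f (tl ys)))) (y # xs))"
    by (rule recfn_sum[OF Q f])
  then show ?thesis by (rule recfn_cong) (simp add: card_set_decode)
qed

section \<open>Codes of finite sequences\<close>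

text \<open>Arithmetic versions of the list operations, read off from
  \<open>list_encode (x # xs) = Suc (prod_encode (x, list_encode xs))\<close>.\<close>

definition code_tl :: "nat \<Rightarrow> nat" where
  "code_tl c = (if c = 0 then 0 else snd (prod_decode (c - 1)))"

definition code_hd :: "nat \<Rightarrow> nat" where
  "code_hd c = fst (prod_decode (c - 1))"

definition code_drop :: "nat \<Rightarrow> nat \<Rightarrow> nat" where
  "code_drop i c = (code_tl ^^ i) c"

definition code_nth :: "nat \<Rightarrow> nat \<Rightarrow> nat" where
  "code_nth i c = code_hd (code_drop i c)"

definition code_length :: "nat \<Rightarrow> nat" where
  "code_length c = (\<Sum>i<c. of_bool (code_drop i c \<noteq> 0))"

lemma code_tl_list_encode: "code_tl (list_encode l) = list_encode (tl l)"
  by (cases l) (auto simp: code_tl_def)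

lemma code_drop_list_encode: "code_drop i (list_encode l) = list_encode (drop i l)"
  unfolding code_drop_def
  by (induction i) (auto simp: code_tl_list_encode drop_Suc tl_drop)

lemma code_hd_list_encode: "l \<noteq> [] \<Longrightarrow> code_hd (list_encode l) = hd l"
  by (cases l) (auto simp: code_hd_def)

lemma code_nth_list_encode: "i < length l \<Longrightarrow> code_nth i (list_encode l) = l ! i"
  by (simp add: code_nth_def code_drop_list_encode code_hd_list_encode hd_drop_conv_nth)

lemma length_le_list_encode: "length l \<le> list_encode l"
proof (induction l)
  case Nil
  then show ?case by simp
next
  case (Cons a l)
  then show ?case using le_prod_encode_2[of "list_encode l" a] by simp
qed

lemma mem_less_list_encode: "x \<in> set l \<Longrightarrow> x < list_encode l"
proof (induction l)
  case Nil
  then show ?case by simp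
next
  case (Cons a l)
  then show ?case using le_prod_encode_2[of "list_encode l" a] le_prod_encode_1[of a "list_encode l"]
    by auto
qed

lemma list_encode_0: "list_encode l = 0 \<longleftrightarrow> l = []"
  by (cases l) auto

lemma code_length_list_encode: "code_length (list_encode l) = length l"
proof -
  have "code_drop i (list_encode l) \<noteq> 0 \<longleftrightarrow> i < length l" for i
    by (auto simp: code_drop_list_encode list_encode_0)
  then have "code_length (list_encode l) = (\<Sum>i<list_encode l. of_bool (i < length l))"
    by (simp add: code_length_def)
  also have "\<dots> = length l" using length_le_list_encode[of l] by (simp add: sum_less_min min_def)
  finally show ?thesis .
qed

lemma recfn_code_tl: "recfn k f \<Longrightarrow> recfn k (\<lambda>xs. code_tl (f xs))"
proof -
  assume f: "recfn k f"
  have "recfn k (\<lambda>xs. if f xs = 0 then 0 else snd (prod_decode (f xs - 1)))"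
    by (rule recfn_If[OF recpred_eq[OF f recfn_const] recfn_const recfn_snd_prod_decode[OF recfn_pred[OF f]]])
  then show ?thesis by (rule recfn_cong) (simp add: code_tl_def)
qed

lemma recfn_code_hd: "recfn k f \<Longrightarrow> recfn k (\<lambda>xs. code_hd (f xs))"
proof -
  assume f: "recfn k f"
  have "recfn k (\<lambda>xs. fst (prod_decode (f xs - 1)))"
    by (rule recfn_fst_prod_decode[OF recfn_pred[OF f]])
  then show ?thesis by (rule recfn_cong) (simp add: code_hd_def)
qed

lemma recfn_code_drop: "recfn k f \<Longrightarrow> recfn k g \<Longrightarrow> recfn k (\<lambda>xs. code_drop (f xs) (g xs))"
  unfolding code_drop_def
  by (rule recfn_binary_rec[where op="\<lambda>n. code_tl ^^ n" and F="\<lambda>ys. ys ! 0"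
        and G="\<lambda>zs. code_tl (zs ! 1)"])
    (simp_all add: recfn_proj recfn_code_tl)

lemma recfn_code_nth: "recfn k f \<Longrightarrow> recfn k g \<Longrightarrow> recfn k (\<lambda>xs. code_nth (f xs) (g xs))"
  unfolding code_nth_def by (rule recfn_code_hd[OF recfn_code_drop])

lemma recfn_code_length: "recfn k f \<Longrightarrow> recfn k (\<lambda>xs. code_length (f xs))"
proof -
  assume f: "recfn k f"
  have Q: "recpred (Suc k) (\<lambda>ys. code_drop (ys ! 0) (f (tl ys)) \<noteq> 0)"
    by (rule recpred_not[OF recpred_eq[OF recfn_code_drop[OF recfn_proj recfn_tl_arg[OF f]] recfn_const]]) simp
  have "recfn k (\<lambda>xs. \<Sum>i<f xs. (\<lambda>ys. of_bool (code_drop (ys ! 0) (f (tl ys)) \<noteq> 0)) (i # xs))"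
    by (rule recfn_sum[OF Q f])
  then show ?thesis by (rule recfn_cong) (simp add: code_length_def)
qed

definition code_take :: "nat \<Rightarrow> nat \<Rightarrow> nat" where
  "code_take k c = list_encode (take k (list_decode c))"

lemma code_nth_list_decode: "i < length (list_decode c) \<Longrightarrow> code_nth i c = list_decode c ! i"
  using code_nth_list_encode[of i "list_decode c"] by simp

lemma code_length_list_decode: "code_length c = length (list_decode c)"
  using code_length_list_encode[of "list_decode c"] by simp

lemma recfn_code_take: "recfn k f \<Longrightarrow> recfn k g \<Longrightarrow> recfn k (\<lambda>xs. code_take (f xs) (g xs))"
proof -
  \<comment> \<open>Codes grow by consing, so the prefix is built from its last entry backwards.\<close>
  define fr where "fr = (\<lambda>j ys. list_encode (drop (ys ! 0 - j) (take (ys ! 0) (list_decode (ys ! 1)))))"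
  define G where "G = (\<lambda>zs. if Suc (zs ! 0) \<le> zs ! 2 \<and> zs ! 2 - Suc (zs ! 0) < code_length (zs ! 3)
     then Suc (prod_encode (code_nth (zs ! 2 - Suc (zs ! 0)) (zs ! 3), zs ! 1)) else zs ! 1)"
  have G: "recfn (Suc (Suc (Suc (Suc 0)))) G"
    unfolding G_def
    by (rule recfn_If recpred_conj recpred_le recfn_Suc recfn_proj recpred_less recfn_diff recfn_code_length recfn_prod_encode recfn_code_nth | simp)+
  have fS: "fr (Suc j) ys = G (j # fr j ys # ys)" for j ys
  proof -
    let ?k = "ys ! 0" and ?l = "list_decode (ys ! 1)"
    show ?thesis
    proof (cases "Suc j \<le> ?k \<and> ?k - Suc j < code_length (ys ! 1)")
      case True
      then have lt: "?k - Suc j < length (take ?k ?l)" by (simp add: code_length_list_decode)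
      have "drop (?k - Suc j) (take ?k ?l) = take ?k ?l ! (?k - Suc j) # drop (Suc (?k - Suc j)) (take ?k ?l)"
        by (rule Cons_nth_drop_Suc[OF lt, symmetric])
      moreover have "Suc (?k - Suc j) = ?k - j" using True Suc_diff_Suc[of j ?k] by simp
      moreover have "take ?k ?l ! (?k - Suc j) = code_nth (?k - Suc j) (ys ! 1)"
        using lt by (simp add: code_nth_list_decode)
      ultimately show ?thesis using True by (simp add: fr_def G_def)
    next
      case False
      then have "drop (?k - Suc j) (take ?k ?l) = drop (?k - j) (take ?k ?l)"
        by (cases "Suc j \<le> ?k") (auto simp: code_length_list_decode)
      then show ?thesis using False by (auto simp: fr_def G_def)
    qed
  qed
  have f0: "fr 0 ys = 0" for ys by (simp add: fr_def)
  have "recfn (Suc (Suc 0)) (\<lambda>xs. fr (xs ! 0) xs)"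
    by (rule recfn_rec_at[where f=fr, OF recfn_const G]) (simp_all add: f0 fS recfn_proj)
  then have b: "recfn (Suc (Suc 0)) (\<lambda>xs. code_take (xs ! 0) (xs ! 1))"
    by (rule recfn_cong) (simp add: fr_def code_take_def)
  assume "recfn k f" "recfn k g"
  from recfn_lift2[OF b _ this] show ?thesis by simp
qed

definition code_new :: "nat \<Rightarrow> nat \<Rightarrow> bool" where
  "code_new j c \<longleftrightarrow> code_nth j c \<noteq> 0 \<and> (\<forall>i<j. code_nth i c \<noteq> code_nth j c)"

lemma recpred_code_new: "recfn k f \<Longrightarrow> recfn k g \<Longrightarrow> recpred k (\<lambda>xs. code_new (f xs) (g xs))"
proof -
  assume f: "recfn k f" and g: "recfn k g"
  have Q: "recpred (Suc k) (\<lambda>ys. code_nth (ys ! 0) (g (tl ys)) \<noteq> code_nth (f (tl ys)) (g (tl ys)))"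
    by (rule recpred_not[OF recpred_eq[OF recfn_code_nth[OF recfn_proj recfn_tl_arg[OF g]] recfn_code_nth[OF recfn_tl_arg[OF f] recfn_tl_arg[OF g]]]]) simp
  have "recpred k (\<lambda>xs. code_nth (f xs) (g xs) \<noteq> 0 \<and> (\<forall>i<f xs. (\<lambda>ys. code_nth (ys ! 0) (g (tl ys)) \<noteq> code_nth (f (tl ys)) (g (tl ys))) (i # xs)))"
    by (rule recpred_conj[OF recpred_not[OF recpred_eq[OF recfn_code_nth[OF f g] recfn_const]] recpred_all_less[OF Q f]])
  then show ?thesis by (rule recfn_cong) (simp add: code_new_def)
qed

definition content_prefix_length :: "nat \<Rightarrow> nat" where
  "content_prefix_length c = bounded_Least (Suc c) (\<lambda>k. \<forall>j<code_length c. k \<le> j \<longrightarrow> \<not> code_new j c)"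

lemma recfn_content_prefix_length: "recfn k g \<Longrightarrow> recfn k (\<lambda>xs. content_prefix_length (g xs))"
proof -
  assume g: "recfn k g"
  have g2: "recfn (Suc (Suc k)) (\<lambda>zs. g (tl (tl zs)))" by (rule recfn_tl_arg[OF recfn_tl_arg[OF g]])
  have g1: "recfn (Suc k) (\<lambda>zs. g (tl zs))" by (rule recfn_tl_arg[OF g])
  have Q: "recpred (Suc (Suc k)) (\<lambda>zs. zs ! 1 \<le> zs ! 0 \<longrightarrow> \<not> code_new (zs ! 0) (g (tl (tl zs))))"
    by (rule recpred_imp[OF recpred_le[OF recfn_proj recfn_proj] recpred_not[OF recpred_code_new[OF recfn_proj g2]]]) simp_all
  have P: "recpred (Suc k) (\<lambda>ys. \<forall>j<code_length (g (tl ys)). (\<lambda>zs. zs ! 1 \<le> zs ! 0 \<longrightarrow> \<not> code_new (zs ! 0) (g (tl (tl zs)))) (j # ys))"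
    by (rule recpred_all_less[OF Q recfn_code_length[OF g1]])
  have "recfn k (\<lambda>xs. bounded_Least (Suc (g xs)) (\<lambda>i. (\<lambda>ys. \<forall>j<code_length (g (tl ys)). (\<lambda>zs. zs ! 1 \<le> zs ! 0 \<longrightarrow> \<not> code_new (zs ! 0) (g (tl (tl zs)))) (j # ys)) (i # xs)))"
    by (rule recfn_bounded_Least[OF P recfn_Suc[OF g]])
  then show ?thesis by (rule recfn_cong) (simp add: content_prefix_length_def)
qed

definition content_prefix :: "nat \<Rightarrow> nat" where
  "content_prefix c = code_take (content_prefix_length c) c"

lemma recfn_content_prefix: "recfn k g \<Longrightarrow> recfn k (\<lambda>xs. content_prefix (g xs))"
  unfolding content_prefix_def by (rule recfn_code_take[OF recfn_content_prefix_length])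

definition code_mem :: "nat \<Rightarrow> nat \<Rightarrow> bool" where
  "code_mem c x \<longleftrightarrow> (\<exists>i<code_length c. code_nth i c = Suc x)"

lemma recpred_code_mem: "recfn k f \<Longrightarrow> recfn k g \<Longrightarrow> recpred k (\<lambda>xs. code_mem (f xs) (g xs))"
proof -
  assume f: "recfn k f" and g: "recfn k g"
  have Q: "recpred (Suc k) (\<lambda>ys. code_nth (ys ! 0) (f (tl ys)) = Suc (g (tl ys)))"
    by (rule recpred_eq[OF recfn_code_nth[OF recfn_proj recfn_tl_arg[OF f]] recfn_Suc[OF recfn_tl_arg[OF g]]]) simp
  have "recpred k (\<lambda>xs. \<exists>i<code_length (f xs). (\<lambda>ys. code_nth (ys ! 0) (f (tl ys)) = Suc (g (tl ys))) (i # xs))"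
    by (rule recpred_ex_less[OF Q recfn_code_length[OF f]])
  then show ?thesis by (rule recfn_cong) (simp add: code_mem_def)
qed

section \<open>Semi-decidable predicates\<close>

abbreviation halts :: "recf \<Rightarrow> nat list \<Rightarrow> bool" where
  "halts r xs \<equiv> \<exists>y. eval r xs y"

definition semidec :: "nat \<Rightarrow> (nat list \<Rightarrow> bool) \<Rightarrow> bool" where
  "semidec k P \<longleftrightarrow> (\<exists>r. \<forall>xs. length xs = k \<longrightarrow> (halts r xs \<longleftrightarrow> P xs))"

lemma semidec_cong: "semidec k P \<Longrightarrow> (\<And>xs. length xs = k \<Longrightarrow> P xs = Q xs) \<Longrightarrow> semidec k Q"
  unfolding semidec_def by blast

lemma halts_Cn:
  "halts (Cn f gs) xs \<longleftrightarrow>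
    (\<exists>zs. length zs = length gs \<and> (\<forall>i<length gs. eval (gs ! i) xs (zs ! i)) \<and> halts f zs)"
proof
  assume "halts (Cn f gs) xs"
  then obtain y where "eval (Cn f gs) xs y" ..
  then show "\<exists>zs. length zs = length gs \<and> (\<forall>i<length gs. eval (gs ! i) xs (zs ! i)) \<and> halts f zs"
    by (rule eval_CnE) blast
next
  assume "\<exists>zs. length zs = length gs \<and> (\<forall>i<length gs. eval (gs ! i) xs (zs ! i)) \<and> halts f zs"
  then show "halts (Cn f gs) xs" by (blast intro: eval_Cn)
qed

lemma semidec_comp:
  assumes "semidec (length Gs) P" "\<forall>G\<in>set Gs. recfn k G"
  shows "semidec k (\<lambda>xs. P (map (\<lambda>G. G xs) Gs))"
proof -
  obtain r where r: "\<forall>zs. length zs = length Gs \<longrightarrow> (halts r zs \<longleftrightarrow> P zs)"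
    using assms(1) unfolding semidec_def by blast
  obtain gs where gs: "length gs = length Gs" "\<forall>i<length Gs. computes (gs ! i) k (Gs ! i)"
    using recfn_programs[OF assms(2)] by blast
  have "halts (Cn r gs) xs \<longleftrightarrow> P (map (\<lambda>G. G xs) Gs)" if "length xs = k" for xs
    using eval_Cn_computes[of gs Gs k xs r] gs r that by simp
  then show ?thesis unfolding semidec_def by blast
qed

lemma semidec_reindex:
  assumes "semidec m P" "\<And>i. i < m \<Longrightarrow> \<sigma> i < k"
  shows "semidec k (\<lambda>xs. P (map (\<lambda>i. xs ! \<sigma> i) [0..<m]))"
  using semidec_comp[of "map (\<lambda>i xs. xs ! \<sigma> i) [0..<m]" P k] assms
  by (simp add: recfn_proj comp_def)

lemma semidec_Cons_arg:
  assumes "semidec (Suc k) P" "recfn k N"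
  shows "semidec k (\<lambda>xs. P (N xs # xs))"
proof (rule semidec_cong)
  show "semidec k (\<lambda>xs. P (map (\<lambda>G. G xs) (N # map (\<lambda>j xs. xs ! j) [0..<k])))"
    by (rule semidec_comp) (use assms in \<open>auto intro: recfn_proj\<close>)
qed (simp only: map_Cons_proj)

lemma semidec_tl_arg:
  assumes "semidec k P"
  shows "semidec (Suc k) (\<lambda>ys. P (tl ys))"
proof (rule semidec_cong)
  show "semidec (Suc k) (\<lambda>ys. P (map (\<lambda>i. ys ! Suc i) [0..<k]))"
    using assms by (rule semidec_reindex) simp
qed (simp only: map_nth_Suc_eq_tl)

lemma semidec_skip_arg1:
  assumes "semidec (Suc k) P"
  shows "semidec (Suc (Suc k)) (\<lambda>zs. P (zs ! 0 # drop 2 zs))"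
proof (rule semidec_cong)
  show "semidec (Suc (Suc k)) (\<lambda>zs. P (map (\<lambda>i. zs ! (if i = 0 then 0 else Suc i)) [0..<Suc k]))"
    using assms by (rule semidec_reindex) simp
qed (simp only: map_nth_skip1_eq)

lemma halts_Pr_Z:
  assumes "\<And>j z. j < m \<Longrightarrow> halts g (j # z # xs) \<longleftrightarrow> Q j"
  shows "halts (Pr Z g) (m # xs) \<longleftrightarrow> (\<forall>j<m. Q j)"
  using assms
proof (induction m)
  case 0
  then show ?case by (blast intro: eval_Pr0 eval_Z)
next
  case (Suc m)
  have "halts (Pr Z g) (Suc m # xs) \<longleftrightarrow> (\<exists>z. eval (Pr Z g) (m # xs) z \<and> halts g (m # z # xs))"
    by (blast elim: eval_PrE intro: eval_PrS)
  also have "\<dots> \<longleftrightarrow> halts (Pr Z g) (m # xs) \<and> Q m"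
    using Suc.prems by blast
  also have "\<dots> \<longleftrightarrow> (\<forall>j<Suc m. Q j)"
    using Suc by (auto simp: less_Suc_eq)
  finally show ?case .
qed

lemma semidec_all_less:
  assumes "semidec (Suc k) P" "recfn k N"
  shows "semidec k (\<lambda>xs. \<forall>j<N xs. P (j # xs))"
proof -
  obtain g where g: "\<forall>zs. length zs = Suc (Suc k) \<longrightarrow> (halts g zs \<longleftrightarrow> P (zs ! 0 # drop 2 zs))"
    using semidec_skip_arg1[OF assms(1)] unfolding semidec_def by blast
  have "halts (Pr Z g) (m # xs) \<longleftrightarrow> (\<forall>j<m. P (j # xs))" if "length xs = k" for m xs
    by (rule halts_Pr_Z) (use g that in simp)
  then have "\<forall>ys. length ys = Suc k \<longrightarrow> (halts (Pr Z g) ys \<longleftrightarrow> (\<forall>j<hd ys. P (j # tl ys)))"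
    by (metis length_Suc_conv list.sel(1,3))
  then have "semidec (Suc k) (\<lambda>ys. \<forall>j<hd ys. P (j # tl ys))"
    unfolding semidec_def by blast
  from semidec_Cons_arg[OF this assms(2)] show ?thesis by simp
qed

lemma semidec_disj:
  assumes "recpred k P" "semidec k Q"
  shows "semidec k (\<lambda>xs. P xs \<or> Q xs)"
proof -
  have "semidec k (\<lambda>xs. \<forall>j<of_bool (\<not> P xs). Q (tl (j # xs)))"
    by (rule semidec_all_less[OF semidec_tl_arg[OF assms(2)] recpred_not[OF assms(1)]])
  then show ?thesis by (rule semidec_cong) auto
qed

lemma semidec_conj:
  assumes "semidec k P" "semidec k Q"
  shows "semidec k (\<lambda>xs. P xs \<and> Q xs)"
proof -
  obtain rP rQ where rP: "\<forall>xs. length xs = k \<longrightarrow> (halts rP xs \<longleftrightarrow> P xs)"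
    and rQ: "\<forall>xs. length xs = k \<longrightarrow> (halts rQ xs \<longleftrightarrow> Q xs)"
    using assms unfolding semidec_def by blast
  have "halts (Cn Z [rP, rQ]) xs \<longleftrightarrow> halts rP xs \<and> halts rQ xs" for xs
  proof
    assume "halts (Cn Z [rP, rQ]) xs"
    then obtain zs where "\<forall>i<Suc (Suc 0). eval ([rP, rQ] ! i) xs (zs ! i)"
      unfolding halts_Cn by auto
    then show "halts rP xs \<and> halts rQ xs" unfolding All_less_Suc2 by auto
  next
    assume "halts rP xs \<and> halts rQ xs"
    then obtain a b where ab: "eval rP xs a" "eval rQ xs b" by blast
    have "eval (Cn Z [rP, rQ]) xs 0"
      by (rule eval_Cn[of "[a, b]"]) (simp_all add: All_less_Suc2 ab eval_Z)
    then show "halts (Cn Z [rP, rQ]) xs" by blast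
  qed
  then show ?thesis unfolding semidec_def using rP rQ by (intro exI[of _ "Cn Z [rP, rQ]"]) auto
qed

lemma semidec_ex_value:
  assumes "computable h" "recfn k K" "semidec (Suc k) Q"
  shows "semidec k (\<lambda>xs. \<exists>e. h (K xs) = Some e \<and> Q (e # xs))"
proof -
  obtain rh where rh: "\<And>x y. h x = Some y \<longleftrightarrow> eval rh [x] y"
    using assms(1) unfolding computable_def by blast
  obtain rK where rK: "computes rK k K" using assms(2) unfolding recfn_def by blast
  obtain rQ where rQ: "\<forall>zs. length zs = Suc k \<longrightarrow> (halts rQ zs \<longleftrightarrow> Q zs)"
    using assms(3) unfolding semidec_def by blast
  define gs where "gs = Cn rh [rK] # map Id [0..<k]"
  have gs: "length gs = Suc k" "gs ! 0 = Cn rh [rK]" "\<And>i. i < k \<Longrightarrow> gs ! Suc i = Id i"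
    by (simp_all add: gs_def)
  have hK: "eval (Cn rh [rK]) xs e \<longleftrightarrow> h (K xs) = Some e" if "length xs = k" for xs e
    using eval_Cn_computes[of "[rK]" "[K]" k xs rh e] rK rh that by simp
  have "halts (Cn rQ gs) xs \<longleftrightarrow> (\<exists>e. h (K xs) = Some e \<and> Q (e # xs))" if xs: "length xs = k" for xs
  proof
    assume "halts (Cn rQ gs) xs"
    then obtain zs where zs: "length zs = Suc k" "\<forall>i<Suc k. eval (gs ! i) xs (zs ! i)" "halts rQ zs"
      unfolding halts_Cn gs(1) by blast
    have "zs ! Suc i = xs ! i" if "i < k" for i
      using zs(2)[rule_format, of "Suc i"] that gs(3) by (auto elim: eval_IdE)
    then have "zs = zs ! 0 # xs"
      using zs(1) xs by (intro nth_equalityI) (auto simp: nth_Cons split: nat.splits)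
    then obtain e where ze: "zs = e # xs" by blast
    have "h (K xs) = Some e" using zs(2)[rule_format, of 0] hK[OF xs] ze gs(2) by simp
    moreover have "Q (e # xs)" using rQ zs(1,3) ze by auto
    ultimately show "\<exists>e. h (K xs) = Some e \<and> Q (e # xs)" by blast
  next
    assume "\<exists>e. h (K xs) = Some e \<and> Q (e # xs)"
    then obtain e where e: "h (K xs) = Some e" "Q (e # xs)" by blast
    then obtain y where y: "eval rQ (e # xs) y" using rQ[rule_format, of "e # xs"] xs by auto
    have "\<forall>i<Suc k. eval (gs ! i) xs ((e # xs) ! i)"
      unfolding All_less_Suc2 using hK[OF xs] e(1) xs gs(2,3) by (simp add: eval_Id)
    then have "eval (Cn rQ gs) xs y" using y xs gs(1) by (intro eval_Cn) simp_all
    then show "halts (Cn rQ gs) xs" by blast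
  qed
  then show ?thesis unfolding semidec_def by blast
qed

lemma semidec_numbering_dom:
  assumes "computable_numbering \<phi>" "recfn k E" "recfn k X"
  shows "semidec k (\<lambda>xs. \<phi> (E xs) (X xs) \<noteq> None)"
proof -
  obtain rU where rU: "\<And>n y. \<phi> (fst (prod_decode n)) (snd (prod_decode n)) = Some y \<longleftrightarrow> eval rU [n] y"
    using assms(1) unfolding computable_numbering_def computable_def by blast
  have "\<forall>ns. length ns = Suc 0 \<longrightarrow>
      (halts rU ns \<longleftrightarrow> \<phi> (fst (prod_decode (ns ! 0))) (snd (prod_decode (ns ! 0))) \<noteq> None)"
    by (auto simp: length_Suc_conv rU[symmetric])
  then have "semidec (Suc 0) (\<lambda>ns. \<phi> (fst (prod_decode (ns ! 0))) (snd (prod_decode (ns ! 0))) \<noteq> None)"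
    unfolding semidec_def by blast
  then have A: "semidec (length [\<lambda>xs. prod_encode (E xs, X xs)])
      (\<lambda>ns. \<phi> (fst (prod_decode (ns ! 0))) (snd (prod_decode (ns ! 0))) \<noteq> None)"
    by simp
  have B: "\<forall>G\<in>set [\<lambda>xs. prod_encode (E xs, X xs)]. recfn k G"
    using recfn_prod_encode[OF assms(2,3)] by simp
  from semidec_comp[OF A B] show ?thesis by simp
qed

lemma acceptable_semidec_index:
  assumes "acceptable \<phi>"
    and "semidec (Suc 0) (\<lambda>ns. P (fst (prod_decode (ns ! 0))) (snd (prod_decode (ns ! 0))))"
  obtains t where "computable (\<lambda>c. Some (t c))" "\<And>c. W \<phi> (t c) = {x. P c x}"
proof -
  obtain r where r: "\<forall>ns. length ns = Suc 0 \<longrightarrow>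
      (halts r ns \<longleftrightarrow> P (fst (prod_decode (ns ! 0))) (snd (prod_decode (ns ! 0))))"
    using assms(2) unfolding semidec_def by blast
  define \<psi> where "\<psi> c x = (if P c x then Some (0::nat) else None)" for c x
  have "eval (Cn Z [r]) [n] y \<longleftrightarrow> y = 0 \<and> halts r [n]" for n y
  proof
    assume "eval (Cn Z [r]) [n] y"
    then show "y = 0 \<and> halts r [n]"
      by (rule eval_CnE) (auto simp: All_less_Suc2 elim: eval_ZE)
  next
    assume "y = 0 \<and> halts r [n]"
    then obtain z where "y = 0" "eval r [n] z" by blast
    then show "eval (Cn Z [r]) [n] y"
      by (intro eval_Cn[of "[z]"]) (simp_all add: eval_Z)
  qed
  then have "computable_numbering \<psi>"
    unfolding computable_numbering_def computable_def \<psi>_def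
    using r by (intro exI[of _ "Cn Z [r]"]) auto
  then obtain t where t: "computable (\<lambda>c. Some (t c))" "\<And>c. \<psi> c = \<phi> (t c)"
    using assms(1) unfolding acceptable_def by blast
  have "W \<phi> (t c) = {x. P c x}" for c
    unfolding W_def t(2)[symmetric] by (auto simp: \<psi>_def split: if_splits)
  with t(1) show thesis by (rule that)
qed

definition consistent_union :: "nat set \<Rightarrow> nat set \<Rightarrow> nat set" where
  "consistent_union D Y = D \<union> (if D \<subseteq> Y then Y else {})"

text \<open>The elements of \<open>mem c\<close> lie below \<open>bnd c\<close>, so consistency of \<open>e\<close> with them is a finite
  conjunction of halting conditions.\<close>

lemma semidec_consistent_union_dom:
  assumes U: "computable_numbering \<phi>" and h: "computable h"
    and key: "recfn (Suc 0) (\<lambda>ns. key (ns ! 0))"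
    and mem: "recpred (Suc (Suc 0)) (\<lambda>ns. mem (ns ! 0) (ns ! 1))"
    and bnd: "recfn (Suc 0) (\<lambda>ns. bnd (ns ! 0))"
  defines "P \<equiv> \<lambda>c x. mem c x \<or>
      (\<exists>e. h (key c) = Some e \<and> (\<forall>y<bnd c. mem c y \<longrightarrow> \<phi> e y \<noteq> None) \<and> \<phi> e x \<noteq> None)"
  shows "semidec (Suc 0) (\<lambda>ns. P (fst (prod_decode (ns ! 0))) (snd (prod_decode (ns ! 0))))"
proof -
  have key': "recfn k (\<lambda>xs. key (f xs))" if "recfn k f" for k f
    by (rule recfn_lift1[OF key _ that]) simp
  have mem': "recpred k (\<lambda>xs. mem (f xs) (g xs))" if "recfn k f" "recfn k g" for k f g
    by (rule recfn_lift2[OF mem _ that]) simp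
  have bnd': "recfn k (\<lambda>xs. bnd (f xs))" if "recfn k f" for k f
    by (rule recfn_lift1[OF bnd _ that]) simp
  let ?c = "\<lambda>n. fst (prod_decode n)" and ?x = "\<lambda>n. snd (prod_decode n)"
  have not_mem: "recpred (Suc (Suc (Suc 0))) (\<lambda>zs. \<not> mem (?c (zs ! 2)) (zs ! 0))"
    by (rule recpred_not[OF mem'[OF recfn_fst_prod_decode[OF recfn_proj] recfn_proj]]) simp_all
  have halts_y: "semidec (Suc (Suc (Suc 0))) (\<lambda>zs. \<phi> (zs ! 1) (zs ! 0) \<noteq> None)"
    by (rule semidec_numbering_dom[OF U recfn_proj recfn_proj]) simp_all
  have bound: "recfn (Suc (Suc 0)) (\<lambda>ys. bnd (?c (ys ! 1)))"
    by (rule bnd'[OF recfn_fst_prod_decode[OF recfn_proj]]) simp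
  from semidec_all_less[OF semidec_disj[OF not_mem halts_y] bound]
  have consistent: "semidec (Suc (Suc 0))
      (\<lambda>ys. \<forall>j<bnd (?c (ys ! 1)). \<not> mem (?c (ys ! 1)) j \<or> \<phi> (ys ! 0) j \<noteq> None)"
    by simp
  have halts_x: "semidec (Suc (Suc 0)) (\<lambda>ys. \<phi> (ys ! 0) (?x (ys ! 1)) \<noteq> None)"
    by (rule semidec_numbering_dom[OF U recfn_proj recfn_snd_prod_decode[OF recfn_proj]]) simp_all
  have key_c: "recfn (Suc 0) (\<lambda>ns. key (?c (ns ! 0)))"
    by (rule key'[OF recfn_fst_prod_decode[OF recfn_proj]]) simp
  have mem_cx: "recpred (Suc 0) (\<lambda>ns. mem (?c (ns ! 0)) (?x (ns ! 0)))"
    by (rule mem'[OF recfn_fst_prod_decode[OF recfn_proj] recfn_snd_prod_decode[OF recfn_proj]])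
      simp_all
  from semidec_disj[OF mem_cx semidec_ex_value[OF h key_c semidec_conj[OF consistent halts_x]]]
  show ?thesis unfolding P_def by simp
qed

lemma acceptable_consistent_union_index:
  assumes acc: "acceptable \<phi>" and h: "computable h"
    and key: "recfn (Suc 0) (\<lambda>ns. key (ns ! 0))"
    and mem: "recpred (Suc (Suc 0)) (\<lambda>ns. mem (ns ! 0) (ns ! 1))"
    and bnd: "recfn (Suc 0) (\<lambda>ns. bnd (ns ! 0))"
  obtains t where "computable (\<lambda>c. Some (t c))"
    and "\<And>c e. h (key c) = Some e \<Longrightarrow> (\<And>y. mem c y \<Longrightarrow> y < bnd c) \<Longrightarrow>
      W \<phi> (t c) = consistent_union {y. mem c y} (W \<phi> e)"
proof -
  define P where "P c x \<longleftrightarrow> mem c x \<or>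
      (\<exists>e. h (key c) = Some e \<and> (\<forall>y<bnd c. mem c y \<longrightarrow> \<phi> e y \<noteq> None) \<and> \<phi> e x \<noteq> None)" for c x
  have "computable_numbering \<phi>" using acc unfolding acceptable_def by blast
  from semidec_consistent_union_dom[OF this h key mem bnd]
  have "semidec (Suc 0) (\<lambda>ns. P (fst (prod_decode (ns ! 0))) (snd (prod_decode (ns ! 0))))"
    unfolding P_def .
  then obtain t where t: "computable (\<lambda>c. Some (t c))" "\<And>c. W \<phi> (t c) = {x. P c x}"
    using acceptable_semidec_index[OF acc] by blast
  have "W \<phi> (t c) = consistent_union {y. mem c y} (W \<phi> e)"
    if "h (key c) = Some e" "\<And>y. mem c y \<Longrightarrow> y < bnd c" for c e
    using that unfolding t(2) P_def consistent_union_def by (auto simp: W_def)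
  with t(1) show thesis by (rule that)
qed

section \<open>Texts\<close>

lemma content_init_mono: "i \<le> j \<Longrightarrow> content_init T i \<subseteq> content_init T j"
  unfolding content_init_def using less_le_trans by blast

lemma finite_content_init: "finite (content_init T i)"
proof -
  have "content_init T i \<subseteq> (\<lambda>k. the (T k)) ` {..<i}"
    unfolding content_init_def by force
  then show ?thesis by (rule finite_subset) simp
qed

lemma content_init_0 [simp]: "content_init T 0 = {}"
  unfolding content_init_def by auto

lemma content_init_Suc: "content_init T (Suc i) = content_init T i \<union> {x. T i = Some x}"
  unfolding content_init_def by (auto simp: less_Suc_eq)

lemma content_init_subset_content: "content_init T i \<subseteq> content T"
  unfolding content_init_def content_def by auto

lemma content_eq_UN_content_init: "content T = (\<Union>i. content_init T i)"
  unfolding content_init_def content_def by auto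

lemma finite_subset_content_init:
  "finite B \<Longrightarrow> B \<subseteq> content T \<Longrightarrow> \<exists>m. B \<subseteq> content_init T m"
proof (induction rule: finite_induct)
  case empty
  then show ?case by auto
next
  case (insert x B)
  then obtain m where m: "B \<subseteq> content_init T m" by auto
  obtain i where i: "x \<in> content_init T i"
    using insert.prems content_eq_UN_content_init by blast
  have "insert x B \<subseteq> content_init T (max m i)"
    using m i content_init_mono[of m "max m i" T] content_init_mono[of i "max m i" T] by auto
  then show ?case by blast
qed

lemma card_content_init_Suc_le: "card (content_init T (Suc i)) \<le> Suc (card (content_init T i))"
proof (cases "T i")
  case None
  then show ?thesis by (simp add: content_init_Suc)
next
  case (Some x)
  then have "content_init T (Suc i) = insert x (content_init T i)" by (auto simp: content_init_Suc)
  then show ?thesis using finite_content_init by (simp add: card_insert_if)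
qed

lemma card_content_init_mono: "m \<le> m' \<Longrightarrow> card (content_init T m) \<le> card (content_init T m')"
  by (rule card_mono[OF finite_content_init content_init_mono])

lemma card_content_init_unbounded:
  "infinite (content T) \<Longrightarrow> \<exists>m. K \<le> card (content_init T m)"
proof -
  assume "infinite (content T)"
  then obtain B where B: "finite B" "card B = K" "B \<subseteq> content T"
    using infinite_arbitrarily_large by blast
  then obtain m where "B \<subseteq> content_init T m" using finite_subset_content_init by blast
  then have "card B \<le> card (content_init T m)" by (rule card_mono[OF finite_content_init])
  then show ?thesis using B by auto
qed

lemma content_init_eventually_content:
  "finite (content T) \<Longrightarrow> \<exists>M. \<forall>m\<ge>M. content_init T m = content T"
proof -
  assume "finite (content T)"
  then obtain M where "content T \<subseteq> content_init T M" using finite_subset_content_init by blast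
  then have "\<forall>m\<ge>M. content_init T m = content T"
    using content_init_mono[of M _ T] content_init_subset_content[of T] by blast
  then show ?thesis by blast
qed

definition list_text :: "nat list \<Rightarrow> txtT" where
  "list_text xs i = (if i < length xs then Some (xs ! i) else None)"

lemma content_init_list_text: "content_init (list_text xs) k = set (take k xs)"
  unfolding content_init_def list_text_def by (force simp: in_set_conv_nth)

lemma content_list_text: "content (list_text xs) = set xs"
  unfolding content_def list_text_def by (force simp: in_set_conv_nth)

lemma content_init_sorted_list_text:
  "finite A \<Longrightarrow> card A \<le> k \<Longrightarrow> content_init (list_text (sorted_list_of_set A)) k = A"
  by (simp add: content_init_list_text)

lemma content_init_list_text_append:
  assumes "finite B" "A \<subseteq> B"
  defines "xs \<equiv> sorted_list_of_set A @ sorted_list_of_set (B - A)"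
  shows "content_init (list_text xs) (card A) = A" "content_init (list_text xs) (card B) = B"
proof -
  have A: "finite A" using assms(1,2) by (rule rev_finite_subset)
  then show "content_init (list_text xs) (card A) = A"
    unfolding xs_def content_init_list_text by simp
  have "card B = card A + card (B - A)" using assms A
    by (metis card_Diff_subset card_mono le_add_diff_inverse)
  then have "take (card B) xs = xs" unfolding xs_def using A by simp
  then show "content_init (list_text xs) (card B) = B"
    unfolding content_init_list_text xs_def using assms A by auto
qed

text \<open>\<open>T'\<close> lists the content of \<open>T\<close> in order of first appearance, without pauses or repetitions.\<close>

lemma repetition_free_text:
  assumes inf: "infinite (content T)"
  obtains T' where "content T' = content T"
    and "\<And>m. content_init T' (card (content_init T m)) = content_init T m"
proof -
  define f where "f q = (LEAST m. q < card (content_init T m))" for q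
  define T' where "T' q = T (f q - 1)" for q
  have ex: "\<exists>m. q < card (content_init T m)" for q
    using card_content_init_unbounded[OF inf, of "Suc q"] Suc_le_eq by blast
  have main: "card (content_init T m) = q \<Longrightarrow> content_init T' q = content_init T m" for q m
  proof (induction q arbitrary: m)
    case 0
    then show ?case using finite_content_init by auto
  next
    case (Suc q)
    let ?m = "f q"
    have lt: "q < card (content_init T ?m)" unfolding f_def by (rule LeastI_ex[OF ex])
    have le: "?m \<le> m" unfolding f_def using Suc.prems by (intro Least_le) simp
    have pos: "0 < ?m" using lt by (cases "?m") auto
    have "\<not> q < card (content_init T (?m - 1))"
      unfolding f_def by (rule not_less_Least) (use pos in \<open>simp add: f_def\<close>)
    moreover have "card (content_init T ?m) \<le> Suc (card (content_init T (?m - 1)))"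
      using card_content_init_Suc_le[of T "?m - 1"] pos by simp
    ultimately have c1: "card (content_init T (?m - 1)) = q" and c2: "card (content_init T ?m) = Suc q"
      using lt by auto
    have "content_init T ?m = content_init T m"
      using content_init_mono[OF le] c2 Suc.prems finite_content_init by (metis card_subset_eq)
    moreover have "content_init T' q = content_init T (?m - 1)" using Suc.IH c1 by simp
    moreover have "content_init T (Suc (?m - 1)) = content_init T ?m" using pos by simp
    ultimately show ?case unfolding content_init_Suc T'_def by (metis content_init_Suc)
  qed
  have "content T' = content T"
  proof
    show "content T' \<subseteq> content T" unfolding content_def T'_def by auto
    show "content T \<subseteq> content T'"
      using main content_init_subset_content unfolding content_eq_UN_content_init[of T] by blast
  qed
  then show thesis by (rule that[of T']) (simp add: main)
qed

section \<open>Consistent conjectures and learning restrictions\<close>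

lemma SemWb_imp_SemConv: "SemWb \<phi> p T \<Longrightarrow> SemConv \<phi> p T"
  unfolding SemConv_def
proof (intro allI impI)
  fix n m assume wb: "SemWb \<phi> p T" and nm: "n < m \<and> content_init T m \<subseteq> W \<phi> (p n)"
  show "W \<phi> (p n) = W \<phi> (p m)"
  proof (rule ccontr)
    assume "W \<phi> (p n) \<noteq> W \<phi> (p m)"
    then have "content_init T m \<inter> W \<phi> (p m) - W \<phi> (p n) \<noteq> {}"
      using wb nm unfolding SemWb_def by (meson le_refl less_imp_le)
    then show False using nm by blast
  qed
qed

lemma SemConv_imp_SemWb:
  assumes conv: "SemConv \<phi> p T" and data: "\<And>m. content_init T m \<subseteq> W \<phi> (p m)"
  shows "SemWb \<phi> p T"
  unfolding SemWb_def
proof (intro allI impI)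
  fix n m assume "\<exists>k. n \<le> k \<and> k \<le> m \<and> W \<phi> (p n) \<noteq> W \<phi> (p k)"
  then obtain k where k: "n \<le> k" "k \<le> m" "W \<phi> (p n) \<noteq> W \<phi> (p k)" by blast
  then have "n < k" by (cases "n = k") auto
  then have "\<not> content_init T k \<subseteq> W \<phi> (p n)" using conv k(3) unfolding SemConv_def by blast
  then have "\<not> content_init T m \<subseteq> W \<phi> (p n)" using content_init_mono[OF k(2)] by blast
  then show "content_init T m \<inter> W \<phi> (p m) - W \<phi> (p n) \<noteq> {}" using data[of m] by blast
qed

lemma SemConv_consistent_union:
  assumes W: "\<And>i. W \<phi> (p i) = consistent_union (content_init T i) (Y i)"
    and same: "\<And>n m. content_init T n = content_init T m \<Longrightarrow> Y n = Y m"
    and adv: "\<And>n m. n < m \<Longrightarrow> content_init T n \<subseteq> Y n \<Longrightarrow> content_init T m \<subseteq> Y n \<Longrightarrow> Y m = Y n"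
  shows "SemConv \<phi> p T"
  unfolding SemConv_def
proof (intro allI impI)
  fix n m assume nm: "n < m \<and> content_init T m \<subseteq> W \<phi> (p n)"
  show "W \<phi> (p n) = W \<phi> (p m)"
  proof (cases "content_init T n \<subseteq> Y n")
    case True
    then have Wn: "W \<phi> (p n) = Y n" by (simp add: W consistent_union_def Un_absorb1)
    then have Ym: "Y m = Y n" using adv True nm by simp
    then have "content_init T m \<subseteq> Y m" using nm Wn by simp
    then show ?thesis using Wn Ym by (simp add: W consistent_union_def Un_absorb1)
  next
    case False
    then have "W \<phi> (p n) = content_init T n" by (simp add: W consistent_union_def)
    then have "content_init T n = content_init T m"
      using nm content_init_mono[of n m T] by auto
    with same[OF this] show ?thesis by (simp add: W)
  qed
qed

lemma SemWb_consistent_union: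
  assumes "\<And>i. W \<phi> (p i) = consistent_union (content_init T i) (Y i)"
    and "\<And>n m. content_init T n = content_init T m \<Longrightarrow> Y n = Y m"
    and "\<And>n m. n < m \<Longrightarrow> content_init T n \<subseteq> Y n \<Longrightarrow> content_init T m \<subseteq> Y n \<Longrightarrow> Y m = Y n"
  shows "SemWb \<phi> p T"
proof (rule SemConv_imp_SemWb[OF SemConv_consistent_union[OF assms]])
  show "content_init T m \<subseteq> W \<phi> (p m)" for m
    unfolding assms(1) consistent_union_def by blast
qed

lemma Bc_consistent_union:
  assumes "\<And>i. W \<phi> (p i) = consistent_union (content_init T i) (Y i)"
    and "\<exists>n0. \<forall>n\<ge>n0. Y n = content T"
  shows "Bc \<phi> p T"
proof -
  obtain n0 where n0: "\<forall>n\<ge>n0. Y n = content T" using assms(2) by blast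
  have "W \<phi> (p n) = content T" if "n0 \<le> n" for n
    using n0 that content_init_subset_content[of T n]
    by (simp add: assms(1) consistent_union_def Un_absorb1)
  then show ?thesis unfolding Bc_def by blast
qed

lemma Bc_consistent_union_finite:
  assumes "\<And>i. W \<phi> (p i) = consistent_union (content_init T i) (Y i)"
    and "finite (content T)" and "\<exists>n0. \<forall>n\<ge>n0. content T \<subseteq> Y n \<longrightarrow> Y n = content T"
  shows "Bc \<phi> p T"
proof -
  obtain M where M: "\<forall>m\<ge>M. content_init T m = content T"
    using content_init_eventually_content[OF assms(2)] by blast
  obtain n0 where n0: "\<forall>n\<ge>n0. content T \<subseteq> Y n \<longrightarrow> Y n = content T" using assms(3) by blast
  have "W \<phi> (p n) = content T" if "max M n0 \<le> n" for n
    using M n0 that by (auto simp: assms(1) consistent_union_def)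
  then show ?thesis unfolding Bc_def by blast
qed

definition obeys ::
  "(nat \<Rightarrow> nat \<Rightarrow> nat option) \<Rightarrow>
   ((nat \<Rightarrow> nat \<Rightarrow> nat option) \<Rightarrow> (nat \<Rightarrow> nat) \<Rightarrow> txtT \<Rightarrow> bool) \<Rightarrow>
   ((nat \<Rightarrow> nat option) \<Rightarrow> txtT \<Rightarrow> nat \<Rightarrow> nat option) \<Rightarrow> (nat \<Rightarrow> nat option) \<Rightarrow> bool" where
  "obeys \<phi> \<alpha> \<beta> h \<longleftrightarrow> (\<forall>T. (\<forall>i. \<beta> h T i \<noteq> None) \<and> \<alpha> \<phi> (\<lambda>i. the (\<beta> h T i)) T)"

definition Bc_learns ::
  "(nat \<Rightarrow> nat \<Rightarrow> nat option) \<Rightarrow> ((nat \<Rightarrow> nat option) \<Rightarrow> txtT \<Rightarrow> nat \<Rightarrow> nat option) \<Rightarrow>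
   (nat \<Rightarrow> nat option) \<Rightarrow> nat set \<Rightarrow> bool" where
  "Bc_learns \<phi> \<beta> h L \<longleftrightarrow> (\<forall>T. content T = L \<longrightarrow> Bc \<phi> (\<lambda>i. the (\<beta> h T i)) T)"

lemma obeys_SemConvD:
  assumes "obeys \<phi> SemConv \<beta> h" "n < m" "content_init T m \<subseteq> W \<phi> (the (\<beta> h T n))"
  shows "W \<phi> (the (\<beta> h T m)) = W \<phi> (the (\<beta> h T n))"
proof -
  have "SemConv \<phi> (\<lambda>i. the (\<beta> h T i)) T" using assms(1) unfolding obeys_def by blast
  then show ?thesis using assms(2,3) unfolding SemConv_def by (simp add: eq_commute)
qed

lemma obeys_defined: "obeys \<phi> \<alpha> \<beta> h \<Longrightarrow> \<beta> h T i = Some (the (\<beta> h T i))"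
  unfolding obeys_def by auto

lemma Bc_learnsD:
  "Bc_learns \<phi> \<beta> h (content T) \<Longrightarrow> \<exists>n0. \<forall>n\<ge>n0. W \<phi> (the (\<beta> h T n)) = content T"
  unfolding Bc_learns_def Bc_def by blast

lemma learns_iff_obeys_Bc_learns: "learns \<phi> \<alpha> \<beta> h L \<longleftrightarrow> obeys \<phi> \<alpha> \<beta> h \<and> Bc_learns \<phi> \<beta> h L"
  unfolding learns_def obeys_def Bc_learns_def by blast

section \<open>Set-driven learners\<close>

lemma SemConv_to_SemWb_Sd:
  assumes acc: "acceptable \<phi>" and h: "computable h" and conv: "obeys \<phi> SemConv Sd_op h"
  obtains h' where "computable h'" "obeys \<phi> SemWb Sd_op h'"
    "\<And>L. Bc_learns \<phi> Sd_op h L \<Longrightarrow> Bc_learns \<phi> Sd_op h' L"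
proof -
  have id: "recfn (Suc 0) (\<lambda>ns. ns ! 0)" by (rule recfn_proj) simp
  have mem: "recpred (Suc (Suc 0)) (\<lambda>ns. ns ! 1 \<in> set_decode (ns ! 0))"
    by (intro recpred_mem_set_decode recfn_proj) simp_all
  obtain t where t: "computable (\<lambda>c. Some (t c))"
    "\<And>c e. h c = Some e \<Longrightarrow> (\<And>y. y \<in> set_decode c \<Longrightarrow> y < c) \<Longrightarrow>
      W \<phi> (t c) = consistent_union {y. y \<in> set_decode c} (W \<phi> e)"
    using acceptable_consistent_union_index[OF acc h id mem id] by blast
  define h' where "h' c = Some (t c)" for c
  let ?Y = "\<lambda>T i. W \<phi> (the (Sd_op h T i))"
  have W': "W \<phi> (the (Sd_op h' T i)) = consistent_union (content_init T i) (?Y T i)" for T i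
  proof -
    have "h (set_encode (content_init T i)) = Some (the (Sd_op h T i))"
      using obeys_defined[OF conv] unfolding Sd_op_def .
    from t(2)[OF this set_decode_less] show ?thesis
      by (simp add: h'_def Sd_op_def set_encode_inverse finite_content_init)
  qed
  have "SemWb \<phi> (\<lambda>i. the (Sd_op h' T i)) T" for T
  proof (rule SemWb_consistent_union[OF W'])
    show "?Y T n = ?Y T m" if "content_init T n = content_init T m" for n m
      using that by (simp add: Sd_op_def)
    show "?Y T m = ?Y T n" if "n < m" "content_init T m \<subseteq> ?Y T n" for n m
      using obeys_SemConvD[OF conv that] .
  qed
  then have "obeys \<phi> SemWb Sd_op h'" unfolding obeys_def h'_def Sd_op_def by simp
  moreover have "computable h'" using t(1) unfolding h'_def .
  moreover have "Bc_learns \<phi> Sd_op h' L" if "Bc_learns \<phi> Sd_op h L" for L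
    unfolding Bc_learns_def
  proof (intro allI impI)
    fix T assume "content T = L"
    with that show "Bc \<phi> (\<lambda>i. the (Sd_op h' T i)) T"
      by (intro Bc_consistent_union[OF W'] Bc_learnsD) simp
  qed
  ultimately show thesis using that by blast
qed

section \<open>Partially set-driven learners\<close>

definition canonical_Psd :: "(nat \<Rightarrow> nat option) \<Rightarrow> nat set \<Rightarrow> nat option" where
  "canonical_Psd h D = h (prod_encode (set_encode D, card D))"

lemma Psd_op_canonical: "content_init T (card D) = D \<Longrightarrow> Psd_op h T (card D) = canonical_Psd h D"
  by (simp add: Psd_op_def canonical_Psd_def)

context
  fixes \<phi> :: "nat \<Rightarrow> nat \<Rightarrow> nat option" and h :: "nat \<Rightarrow> nat option"
  assumes conv: "obeys \<phi> SemConv Psd_op h"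
begin

lemma canonical_Psd_defined:
  assumes "finite D"
  shows "canonical_Psd h D = Some (the (canonical_Psd h D))"
proof -
  have "content_init (list_text (sorted_list_of_set D)) (card D) = D"
    using assms by (simp add: content_init_sorted_list_text)
  then show ?thesis
    using obeys_defined[OF conv, of "list_text (sorted_list_of_set D)" "card D"]
    by (simp add: Psd_op_canonical)
qed

lemma canonical_Psd_conservative:
  assumes "finite B" "A \<subseteq> B" "B \<subseteq> W \<phi> (the (canonical_Psd h A))"
  shows "W \<phi> (the (canonical_Psd h B)) = W \<phi> (the (canonical_Psd h A))"
proof (cases "A = B")
  case False
  define T where "T = list_text (sorted_list_of_set A @ sorted_list_of_set (B - A))"
  have A: "content_init T (card A) = A" and B: "content_init T (card B) = B"
    using content_init_list_text_append[OF assms(1,2)] unfolding T_def by auto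
  have lt: "card A < card B" using False assms(1,2) by (simp add: psubset_card_mono)
  have "content_init T (card B) \<subseteq> W \<phi> (the (Psd_op h T (card A)))"
    using A B assms(3) by (simp add: Psd_op_canonical)
  from obeys_SemConvD[OF conv lt this] show ?thesis using A B by (simp add: Psd_op_canonical)
qed simp

lemma canonical_Psd_finite_Bc:
  assumes "Bc_learns \<phi> Psd_op h L" "finite L" "L \<subseteq> W \<phi> (the (canonical_Psd h L))"
  shows "W \<phi> (the (canonical_Psd h L)) = L"
proof -
  define T where "T = list_text (sorted_list_of_set L)"
  have "content T = L" using assms(2) by (simp add: T_def content_list_text)
  then obtain n0 where n0: "\<forall>n\<ge>n0. W \<phi> (the (Psd_op h T n)) = L"
    using Bc_learnsD[of \<phi> Psd_op h T] assms(1) by auto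
  define j where "j = max n0 (Suc (card L))"
  have cj: "content_init T j = L" and cL: "content_init T (card L) = L"
    using content_init_sorted_list_text[OF assms(2)] unfolding T_def j_def by simp_all
  have lt: "card L < j" unfolding j_def by simp
  have "content_init T j \<subseteq> W \<phi> (the (Psd_op h T (card L)))"
    using cj cL assms(3) by (simp add: Psd_op_canonical)
  from obeys_SemConvD[OF conv lt this] have "W \<phi> (the (Psd_op h T (card L))) = L"
    using n0 unfolding j_def by simp
  then show ?thesis using cL by (simp add: Psd_op_canonical)
qed

lemma canonical_Psd_infinite_Bc:
  assumes "Bc_learns \<phi> Psd_op h (content T)" "infinite (content T)"
  shows "\<exists>n0. \<forall>n\<ge>n0. W \<phi> (the (canonical_Psd h (content_init T n))) = content T"
proof -
  obtain T' where T': "content T' = content T"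
    "\<And>m. content_init T' (card (content_init T m)) = content_init T m"
    using repetition_free_text[OF assms(2)] by blast
  obtain n0 where n0: "\<forall>n\<ge>n0. W \<phi> (the (Psd_op h T' n)) = content T"
    using Bc_learnsD[of \<phi> Psd_op h T'] assms(1) T'(1) by auto
  obtain M where M: "n0 \<le> card (content_init T M)"
    using card_content_init_unbounded[OF assms(2)] by blast
  have "W \<phi> (the (canonical_Psd h (content_init T m))) = content T" if "M \<le> m" for m
  proof -
    have "n0 \<le> card (content_init T m)" using M card_content_init_mono[OF that, of T] by linarith
    then have "W \<phi> (the (Psd_op h T' (card (content_init T m)))) = content T" using n0 by blast
    then show ?thesis by (simp add: Psd_op_canonical[OF T'(2)])
  qed
  then show ?thesis by blast
qed

lemma canonical_Psd_Bc:
  assumes W: "\<And>i. W \<phi> (p i) =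
      consistent_union (content_init T i) (W \<phi> (the (canonical_Psd h (content_init T i))))"
    and bc: "Bc_learns \<phi> Psd_op h (content T)"
  shows "Bc \<phi> p T"
proof (cases "finite (content T)")
  case True
  then obtain M where "\<forall>m\<ge>M. content_init T m = content T"
    using content_init_eventually_content by blast
  then have "\<forall>n\<ge>M. content T \<subseteq> W \<phi> (the (canonical_Psd h (content_init T n))) \<longrightarrow>
      W \<phi> (the (canonical_Psd h (content_init T n))) = content T"
    using canonical_Psd_finite_Bc[OF bc True] by simp
  then show ?thesis using True by (intro Bc_consistent_union_finite[OF W]) auto
next
  case False
  then show ?thesis by (intro Bc_consistent_union[OF W] canonical_Psd_infinite_Bc[OF bc])
qed

end

lemma canonical_Psd_index:
  assumes acc: "acceptable \<phi>" and h: "computable h" and conv: "obeys \<phi> SemConv Psd_op h"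
  obtains t where "computable (\<lambda>c. Some (t c))"
    "\<And>D i. finite D \<Longrightarrow>
      W \<phi> (t (prod_encode (set_encode D, i))) = consistent_union D (W \<phi> (the (canonical_Psd h D)))"
proof -
  let ?D = "\<lambda>c. set_decode (fst (prod_decode c))"
  have key: "recfn (Suc 0) (\<lambda>ns. prod_encode (fst (prod_decode (ns ! 0)), card (?D (ns ! 0))))"
    by (intro recfn_prod_encode recfn_fst_prod_decode recfn_card_set_decode recfn_proj) simp_all
  have mem: "recpred (Suc (Suc 0)) (\<lambda>ns. ns ! 1 \<in> ?D (ns ! 0))"
    by (intro recpred_mem_set_decode recfn_fst_prod_decode recfn_proj) simp_all
  have bnd: "recfn (Suc 0) (\<lambda>ns. fst (prod_decode (ns ! 0)))"
    by (intro recfn_fst_prod_decode recfn_proj) simp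
  obtain t where t: "computable (\<lambda>c. Some (t c))"
    "\<And>c e. h (prod_encode (fst (prod_decode c), card (?D c))) = Some e \<Longrightarrow>
      (\<And>y. y \<in> ?D c \<Longrightarrow> y < fst (prod_decode c)) \<Longrightarrow>
      W \<phi> (t c) = consistent_union {y. y \<in> ?D c} (W \<phi> e)"
    using acceptable_consistent_union_index[OF acc h key mem bnd] by blast
  have "W \<phi> (t (prod_encode (set_encode D, i))) = consistent_union D (W \<phi> (the (canonical_Psd h D)))"
    if D: "finite D" for D i
  proof -
    have C: "set_decode (set_encode D) = D" by (rule set_encode_inverse[OF D])
    have "h (prod_encode (set_encode D, card D)) = Some (the (canonical_Psd h D))"
      using canonical_Psd_defined[OF conv D] unfolding canonical_Psd_def .
    moreover have "y < set_encode D" if "y \<in> D" for y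
      using set_decode_less[of y "set_encode D"] that C by simp
    ultimately show ?thesis
      using t(2)[of "prod_encode (set_encode D, i)", unfolded prod_encode_inverse fst_conv C] by simp
  qed
  with t(1) show thesis by (rule that)
qed

lemma SemConv_to_SemWb_Psd:
  assumes acc: "acceptable \<phi>" and h: "computable h" and conv: "obeys \<phi> SemConv Psd_op h"
  obtains h' where "computable h'" "obeys \<phi> SemWb Psd_op h'"
    "\<And>L. Bc_learns \<phi> Psd_op h L \<Longrightarrow> Bc_learns \<phi> Psd_op h' L"
proof -
  obtain t where t: "computable (\<lambda>c. Some (t c))"
    "\<And>D i. finite D \<Longrightarrow>
      W \<phi> (t (prod_encode (set_encode D, i))) = consistent_union D (W \<phi> (the (canonical_Psd h D)))"
    using canonical_Psd_index[OF acc h conv] by blast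
  define h' where "h' c = Some (t c)" for c
  let ?Y = "\<lambda>D. W \<phi> (the (canonical_Psd h D))"
  have W': "W \<phi> (the (Psd_op h' T i)) = consistent_union (content_init T i) (?Y (content_init T i))"
    for T i
    by (simp add: h'_def Psd_op_def t(2) finite_content_init)
  have "SemWb \<phi> (\<lambda>i. the (Psd_op h' T i)) T" for T
    by (rule SemWb_consistent_union[OF W'])
      (simp_all add: canonical_Psd_conservative[OF conv finite_content_init content_init_mono])
  then have "obeys \<phi> SemWb Psd_op h'" unfolding obeys_def h'_def Psd_op_def by simp
  moreover have "computable h'" using t(1) unfolding h'_def .
  moreover have "Bc_learns \<phi> Psd_op h' L" if "Bc_learns \<phi> Psd_op h L" for L
    unfolding Bc_learns_def
  proof (intro allI impI)
    fix T assume "content T = L"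
    with that show "Bc \<phi> (\<lambda>i. the (Psd_op h' T i)) T" by (intro canonical_Psd_Bc[OF conv W']) simp
  qed
  ultimately show thesis using that by blast
qed

section \<open>Full-text learners\<close>

definition symbol_code :: "nat option \<Rightarrow> nat" where
  "symbol_code c = (case c of None \<Rightarrow> 0 | Some n \<Rightarrow> Suc n)"

lemma symbol_code_inj: "symbol_code a = symbol_code b \<longleftrightarrow> a = b"
  by (cases a; cases b) (auto simp: symbol_code_def)

lemma seq_code_init_seg: "seq_code (init_seg T m) = list_encode (map (\<lambda>i. symbol_code (T i)) [0..<m])"
  unfolding seq_code_def init_seg_def symbol_code_def by (simp add: comp_def)

definition content_onset :: "txtT \<Rightarrow> nat \<Rightarrow> nat" where
  "content_onset T m = (LEAST j. content_init T j = content_init T m)"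

lemma content_onset_le: "content_onset T m \<le> m"
  unfolding content_onset_def by (rule Least_le) simp

lemma content_init_content_onset: "content_init T (content_onset T m) = content_init T m"
  unfolding content_onset_def by (rule LeastI[of _ m]) simp

lemma content_onset_cong: "content_init T n = content_init T m \<Longrightarrow> content_onset T n = content_onset T m"
  unfolding content_onset_def by simp

lemma content_init_eq_iff_no_growth: "k \<le> m \<Longrightarrow> content_init T k = content_init T m \<longleftrightarrow>
   (\<forall>j. k \<le> j \<and> j < m \<longrightarrow> content_init T (Suc j) = content_init T j)"
proof (induction m rule: dec_induct)
  case base
  then show ?case by auto
next
  case (step m)
  show ?case
  proof
    assume eq: "content_init T k = content_init T (Suc m)"
    show "\<forall>j. k \<le> j \<and> j < Suc m \<longrightarrow> content_init T (Suc j) = content_init T j"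
    proof (intro allI impI)
      fix j assume j: "k \<le> j \<and> j < Suc m"
      have "content_init T k \<subseteq> content_init T j" using j content_init_mono by auto
      moreover have "content_init T j \<subseteq> content_init T (Suc j)" by (rule content_init_mono) simp
      moreover have "content_init T (Suc j) \<subseteq> content_init T (Suc m)" using j content_init_mono by auto
      ultimately show "content_init T (Suc j) = content_init T j" using eq by blast
    qed
  next
    assume "\<forall>j. k \<le> j \<and> j < Suc m \<longrightarrow> content_init T (Suc j) = content_init T j"
    then show "content_init T k = content_init T (Suc m)" using step by (metis less_Suc_eq)
  qed
qed

lemma code_new_seq_code:
  assumes "j < m"
  shows "code_new j (seq_code (init_seg T m)) \<longleftrightarrow> content_init T (Suc j) \<noteq> content_init T j"
proof -
  let ?l = "map (\<lambda>i. symbol_code (T i)) [0..<m]"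
  have ln: "code_nth i (seq_code (init_seg T m)) = symbol_code (T i)" if "i < m" for i
    unfolding seq_code_init_seg using that by (simp add: code_nth_list_encode)
  have "code_new j (seq_code (init_seg T m)) \<longleftrightarrow> symbol_code (T j) \<noteq> 0 \<and> (\<forall>i<j. symbol_code (T i) \<noteq> symbol_code (T j))"
    unfolding code_new_def using ln assms by auto
  also have "\<dots> \<longleftrightarrow> (\<exists>x. T j = Some x \<and> x \<notin> content_init T j)"
    unfolding content_init_def symbol_code_inj by (auto simp: symbol_code_def split: option.splits)
  also have "\<dots> \<longleftrightarrow> content_init T (Suc j) \<noteq> content_init T j"
    unfolding content_init_Suc by auto
  finally show ?thesis .
qed

lemma content_prefix_seq_code: "content_prefix (seq_code (init_seg T m)) = seq_code (init_seg T (content_onset T m))"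
proof -
  let ?c = "seq_code (init_seg T m)"
  let ?l = "map (\<lambda>i. symbol_code (T i)) [0..<m]"
  have c: "?c = list_encode ?l" by (rule seq_code_init_seg)
  have len: "code_length ?c = m" unfolding c code_length_list_encode by simp
  have mc: "m \<le> ?c" unfolding c using length_le_list_encode[of ?l] by simp
  define P where "P k = (\<forall>j<code_length ?c. k \<le> j \<longrightarrow> \<not> code_new j ?c)" for k
  have P: "k \<le> m \<Longrightarrow> P k \<longleftrightarrow> content_init T k = content_init T m" for k
    unfolding P_def len using content_init_eq_iff_no_growth[of k m T] code_new_seq_code by auto
  have "content_prefix_length ?c = (LEAST k. P k)"
  proof -
    have "P m" unfolding P_def len by simp
    then have "\<exists>i<Suc ?c. P i" using mc by (intro exI[of _ m]) simp
    then show ?thesis unfolding content_prefix_length_def bounded_Least_def P_def by simp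
  qed
  also have "\<dots> = content_onset T m"
  proof (rule Least_equality)
    show "P (content_onset T m)" using P[OF content_onset_le] content_init_content_onset by simp
    fix y assume "P y"
    show "content_onset T m \<le> y"
    proof (cases "y \<le> m")
      case True
      then have "content_init T y = content_init T m" using P \<open>P y\<close> by simp
      then show ?thesis unfolding content_onset_def by (rule Least_le)
    next
      case False
      then show ?thesis using content_onset_le[of T m] by simp
    qed
  qed
  finally have ks: "content_prefix_length ?c = content_onset T m" .
  have "content_prefix ?c = code_take (content_onset T m) ?c" by (simp add: content_prefix_def ks)
  also have "\<dots> = list_encode (take (content_onset T m) ?l)" by (simp add: code_take_def c)
  also have "\<dots> = seq_code (init_seg T (content_onset T m))"
    unfolding seq_code_init_seg using content_onset_le[of T m] by (simp add: take_map)
  finally show ?thesis .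
qed

lemma code_mem_seq_code: "code_mem (seq_code (init_seg T m)) x \<longleftrightarrow> x \<in> content_init T m"
proof -
  have ln: "code_nth i (seq_code (init_seg T m)) = symbol_code (T i)" if "i < m" for i
    unfolding seq_code_init_seg using that by (simp add: code_nth_list_encode)
  have len: "code_length (seq_code (init_seg T m)) = m" unfolding seq_code_init_seg code_length_list_encode by simp
  show ?thesis unfolding code_mem_def len content_init_def using ln
    by (auto simp: symbol_code_def split: option.splits)
qed

lemma code_mem_less_seq_code: "x \<in> content_init T m \<Longrightarrow> x < seq_code (init_seg T m)"
proof -
  assume "x \<in> content_init T m"
  then obtain i where i: "i < m" "T i = Some x" unfolding content_init_def by auto
  then have "Suc x \<in> set (map (\<lambda>i. symbol_code (T i)) [0..<m])" by (force simp: symbol_code_def)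
  then have "Suc x < list_encode (map (\<lambda>i. symbol_code (T i)) [0..<m])" by (rule mem_less_list_encode)
  then show ?thesis unfolding seq_code_init_seg by simp
qed

context
  fixes \<phi> :: "nat \<Rightarrow> nat \<Rightarrow> nat option" and h :: "nat \<Rightarrow> nat option"
begin

abbreviation onset_conj :: "txtT \<Rightarrow> nat \<Rightarrow> nat set" where
  "onset_conj T i \<equiv> W \<phi> (the (G_op h T (content_onset T i)))"

lemma onset_conj_conservative:
  assumes conv: "obeys \<phi> SemConv G_op h" and "n < m" "content_init T m \<subseteq> onset_conj T n"
  shows "onset_conj T m = onset_conj T n"
proof (cases "content_init T n = content_init T m")
  case True
  then show ?thesis using content_onset_cong by metis
next
  case False
  have "n < content_onset T m"
  proof (rule ccontr)
    assume "\<not> n < content_onset T m"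
    then have "content_init T m \<subseteq> content_init T n"
      using content_init_mono[of "content_onset T m" n T] content_init_content_onset[of T m] by simp
    then show False using False content_init_mono[of n m T] assms(2) by auto
  qed
  then have "content_onset T n < content_onset T m" using content_onset_le[of T n] by simp
  moreover have "content_init T (content_onset T m) \<subseteq> onset_conj T n"
    using assms(3) content_init_content_onset[of T m] by simp
  ultimately show ?thesis by (rule obeys_SemConvD[OF conv])
qed

lemma onset_conj_finite_Bc:
  assumes conv: "obeys \<phi> SemConv G_op h"
    and bc: "Bc \<phi> (\<lambda>i. the (G_op h T i)) T" and fin: "finite (content T)"
  shows "\<exists>M. \<forall>m\<ge>M. content T \<subseteq> onset_conj T m \<longrightarrow> onset_conj T m = content T"
proof -
  obtain n0 where n0: "\<forall>n\<ge>n0. W \<phi> (the (G_op h T n)) = content T" using bc unfolding Bc_def by blast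
  obtain M where M: "\<forall>m\<ge>M. content_init T m = content T"
    using content_init_eventually_content[OF fin] by blast
  have "onset_conj T m = content T" if "M \<le> m" "content T \<subseteq> onset_conj T m" for m
  proof -
    define j where "j = max n0 (max m (Suc (content_onset T m)))"
    have "content_onset T m < j" unfolding j_def by simp
    moreover have "content_init T j \<subseteq> onset_conj T m" using M that unfolding j_def by simp
    ultimately have "W \<phi> (the (G_op h T j)) = onset_conj T m" by (rule obeys_SemConvD[OF conv])
    moreover have "W \<phi> (the (G_op h T j)) = content T" using n0 unfolding j_def by simp
    ultimately show ?thesis by simp
  qed
  then show ?thesis by blast
qed

lemma onset_conj_infinite_Bc:
  assumes bc: "Bc \<phi> (\<lambda>i. the (G_op h T i)) T" and inf: "infinite (content T)"
  shows "\<exists>M. \<forall>m\<ge>M. onset_conj T m = content T"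
proof -
  obtain n0 where n0: "\<forall>n\<ge>n0. W \<phi> (the (G_op h T n)) = content T" using bc unfolding Bc_def by blast
  obtain M where M: "Suc (card (content_init T n0)) \<le> card (content_init T M)"
    using card_content_init_unbounded[OF inf] by blast
  have "n0 \<le> content_onset T m" if "M \<le> m" for m
  proof (rule ccontr)
    assume "\<not> n0 \<le> content_onset T m"
    then have "content_init T m \<subseteq> content_init T n0"
      using content_init_mono[of "content_onset T m" n0 T] content_init_content_onset[of T m] by simp
    then have "card (content_init T m) \<le> card (content_init T n0)"
      by (rule card_mono[OF finite_content_init])
    then show False using M card_content_init_mono[OF that, of T] by simp
  qed
  then show ?thesis using n0 by blast
qed

lemma onset_conj_Bc:
  assumes conv: "obeys \<phi> SemConv G_op h"
    and W: "\<And>i. W \<phi> (p i) = consistent_union (content_init T i) (onset_conj T i)"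
    and bc: "Bc \<phi> (\<lambda>i. the (G_op h T i)) T"
  shows "Bc \<phi> p T"
  using onset_conj_finite_Bc[OF conv bc] onset_conj_infinite_Bc[OF bc]
  by (cases "finite (content T)") (blast intro: Bc_consistent_union_finite[OF W] Bc_consistent_union[OF W])+

end

lemma SemConv_to_SemWb_G:
  assumes acc: "acceptable \<phi>" and h: "computable h" and conv: "obeys \<phi> SemConv G_op h"
  obtains h' where "computable h'" "obeys \<phi> SemWb G_op h'"
    "\<And>L. Bc_learns \<phi> G_op h L \<Longrightarrow> Bc_learns \<phi> G_op h' L"
proof -
  have key: "recfn (Suc 0) (\<lambda>ns. content_prefix (ns ! 0))"
    by (intro recfn_content_prefix recfn_proj) simp
  have mem: "recpred (Suc (Suc 0)) (\<lambda>ns. code_mem (ns ! 0) (ns ! 1))"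
    by (intro recpred_code_mem recfn_proj) simp_all
  have bnd: "recfn (Suc 0) (\<lambda>ns. ns ! 0)" by (rule recfn_proj) simp
  obtain t where t: "computable (\<lambda>c. Some (t c))"
    "\<And>c e. h (content_prefix c) = Some e \<Longrightarrow> (\<And>y. code_mem c y \<Longrightarrow> y < c) \<Longrightarrow>
      W \<phi> (t c) = consistent_union {y. code_mem c y} (W \<phi> e)"
    using acceptable_consistent_union_index[OF acc h key mem bnd] by blast
  define h' where "h' c = Some (t c)" for c
  have W': "W \<phi> (the (G_op h' T i)) = consistent_union (content_init T i) (onset_conj \<phi> h T i)" for T i
  proof -
    have "h (content_prefix (seq_code (init_seg T i))) = Some (the (G_op h T (content_onset T i)))"
      using obeys_defined[OF conv] unfolding content_prefix_seq_code G_op_def .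
    from t(2)[OF this] show ?thesis
      by (simp add: h'_def G_op_def code_mem_seq_code code_mem_less_seq_code)
  qed
  have "SemWb \<phi> (\<lambda>i. the (G_op h' T i)) T" for T
  proof (rule SemWb_consistent_union[OF W'])
    show "onset_conj \<phi> h T n = onset_conj \<phi> h T m" if "content_init T n = content_init T m" for n m
      using content_onset_cong[OF that] by simp
    show "onset_conj \<phi> h T m = onset_conj \<phi> h T n"
      if "n < m" "content_init T m \<subseteq> onset_conj \<phi> h T n" for n m
      using onset_conj_conservative[OF conv that] .
  qed
  then have "obeys \<phi> SemWb G_op h'" unfolding obeys_def h'_def G_op_def by simp
  moreover have "computable h'" using t(1) unfolding h'_def .
  moreover have "Bc_learns \<phi> G_op h' L" if "Bc_learns \<phi> G_op h L" for L
    using that onset_conj_Bc[OF conv W'] unfolding Bc_learns_def by blast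
  ultimately show thesis using that by blast
qed

lemma TxtBc_SemWb_subset_SemConv: "TxtBc \<phi> SemWb \<beta> \<subseteq> TxtBc \<phi> SemConv \<beta>"
proof -
  have "learns \<phi> SemWb \<beta> h L \<Longrightarrow> learns \<phi> SemConv \<beta> h L" for h L
    unfolding learns_def using SemWb_imp_SemConv by blast
  then show ?thesis unfolding TxtBc_def by blast
qed

lemma TxtBc_SemConv_subset_SemWb:
  assumes "\<And>h. computable h \<Longrightarrow> obeys \<phi> SemConv \<beta> h \<Longrightarrow>
    \<exists>h'. computable h' \<and> obeys \<phi> SemWb \<beta> h' \<and> (\<forall>L. Bc_learns \<phi> \<beta> h L \<longrightarrow> Bc_learns \<phi> \<beta> h' L)"
  shows "TxtBc \<phi> SemConv \<beta> \<subseteq> TxtBc \<phi> SemWb \<beta>"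
proof
  fix \<L> assume "\<L> \<in> TxtBc \<phi> SemConv \<beta>"
  then obtain h where h: "computable h" "\<And>L. L \<in> \<L> \<Longrightarrow> obeys \<phi> SemConv \<beta> h \<and> Bc_learns \<phi> \<beta> h L"
    unfolding TxtBc_def learns_iff_obeys_Bc_learns by blast
  show "\<L> \<in> TxtBc \<phi> SemWb \<beta>"
  proof (cases "\<L> = {}")
    case True
    then show ?thesis using h(1) unfolding TxtBc_def by blast
  next
    case False
    then have "obeys \<phi> SemConv \<beta> h" using h(2) by blast
    then obtain h' where h': "computable h'" "obeys \<phi> SemWb \<beta> h'"
      "\<forall>L. Bc_learns \<phi> \<beta> h L \<longrightarrow> Bc_learns \<phi> \<beta> h' L"
      using assms h(1) by blast
    have "learns \<phi> SemWb \<beta> h' L" if "L \<in> \<L>" for L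
      using h(2)[OF that] h'(2,3) unfolding learns_iff_obeys_Bc_learns by blast
    with h'(1) show ?thesis unfolding TxtBc_def by blast
  qed
qed

theorem theorem14:
  fixes \<phi> :: "nat \<Rightarrow> nat \<Rightarrow> nat option"
    and \<beta> :: "(nat \<Rightarrow> nat option) \<Rightarrow> txtT \<Rightarrow> nat \<Rightarrow> nat option"
  assumes "acceptable \<phi>"
    and "\<beta> \<in> {G_op, Psd_op, Sd_op}"
  shows "TxtBc \<phi> SemWb \<beta> = TxtBc \<phi> SemConv \<beta>"
proof (rule antisym[OF TxtBc_SemWb_subset_SemConv TxtBc_SemConv_subset_SemWb])
  fix h assume h: "computable h" "obeys \<phi> SemConv \<beta> h"
  from assms(2) consider "\<beta> = G_op" | "\<beta> = Psd_op" | "\<beta> = Sd_op" by blast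
  then show "\<exists>h'. computable h' \<and> obeys \<phi> SemWb \<beta> h' \<and>
      (\<forall>L. Bc_learns \<phi> \<beta> h L \<longrightarrow> Bc_learns \<phi> \<beta> h' L)"
  proof cases
    case 1
    show ?thesis unfolding 1 by (rule SemConv_to_SemWb_G[OF assms(1) h(1) h(2)[unfolded 1]]) blast
  next
    case 2
    show ?thesis unfolding 2 by (rule SemConv_to_SemWb_Psd[OF assms(1) h(1) h(2)[unfolded 2]]) blast
  next
    case 3
    show ?thesis unfolding 3 by (rule SemConv_to_SemWb_Sd[OF assms(1) h(1) h(2)[unfolded 3]]) blast
  qed
qed

end
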